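(* Let $h=(a,s,p):\mathbb{D}\to\overline{\mathcal{P}}$ be holomorphic. Then there exists a holomorphic $H:\mathbb{D}\to\mathbb{C}^{2\times2}$ with $\pi\circ H=h$ if and only if there is no point $\alpha\in\mathbb{D}$ such that, for some odd positive integer $n$, (1) $\alpha$ is a zero of $\tfrac14 s^2-p$ of multiplicity exactly $n$, and (2) $\alpha$ is a zero of $a$ of multiplicity greater than $n$ (a zero of an identically vanishing function being regarded as of infinite multiplicity).
   Context: $\mathbb{D}$ is the open unit disc. $\mathbb{B}$ is the open unit ball of $\mathbb{C}^{2\times2}$ (operator norm), $\pi(A)=(a_{21},\operatorname{tr}A,\det A)$ for $A=[a_{ij}]$, $\mathcal{P}=\pi(\mathbb{B})$ and $\overline{\mathcal{P}}$ its closure. *)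

theory Defs
  imports "HOL-Analysis.Analysis"
begin

definition matBall :: "(complex^2^2) set" where
  "matBall = {A. onorm (\<lambda>x. A *v x) < 1}"

definition piMap :: "complex^2^2 \<Rightarrow> complex \<times> complex \<times> complex" where
  "piMap A = (A $ 2 $ 1, A $ 1 $ 1 + A $ 2 $ 2, det A)"

definition Pent :: "(complex \<times> complex \<times> complex) set" where
  "Pent = piMap ` matBall"

text \<open>f (holomorphic on the unit disc) has a zero at alpha of multiplicity at least m
  (identically vanishing functions have zeros of every multiplicity).\<close>
definition zero_mult_ge :: "(complex \<Rightarrow> complex) \<Rightarrow> complex \<Rightarrow> nat \<Rightarrow> bool" where
  "zero_mult_ge f \<alpha> m \<longleftrightarrow>
     (\<exists>g. g holomorphic_on ball 0 1 \<and> (\<forall>z\<in>ball 0 1. f z = (z - \<alpha>) ^ m * g z))"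

definition zero_mult_eq :: "(complex \<Rightarrow> complex) \<Rightarrow> complex \<Rightarrow> nat \<Rightarrow> bool" where
  "zero_mult_eq f \<alpha> n \<longleftrightarrow> zero_mult_ge f \<alpha> n \<and> \<not> zero_mult_ge f \<alpha> (Suc n)"

end

theory Submission
  imports Defs "HOL-Complex_Analysis.Complex_Analysis"
begin

(* Write q = s^2/4 - p.  A matrix M with
   pi(M) = (a, s, p) satisfies ((M11 - M22)/2)^2 = q - a M12, and conversely a solution of
   q - d^2 = a b gives the lift H = [[s/2 + d, b], [a, s/2 - d]].  So a lift exists iff q is a
   square modulo a on the disc.
   Necessity: a zero of q of exact odd order n where a vanishes to order > n would make a
   square vanish to odd order.
   Sufficiency: locally q is a square modulo a (q has even order there, or a divides q).  If
   a does not vanish identically, a Mittag-Leffler interpolation on the disc glues the local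
   roots modulo a, and divisibility by a is a local property; if a vanishes identically, q is
   locally a square, hence a global square via a Weierstrass product on the disc. *)

lemma nonvanishing_ball:
  fixes f :: "complex \<Rightarrow> complex"
  assumes "continuous_on S f" "open S" "x \<in> S" "f x \<noteq> 0"
  obtains r where "r > 0" "ball x r \<subseteq> S" "\<And>w. w \<in> ball x r \<Longrightarrow> f w \<noteq> 0"
proof -
  have "isCont f x" using assms continuous_on_eq_continuous_at by blast
  then obtain e where e: "e > 0" "\<forall>w. dist x w < e \<longrightarrow> f w \<noteq> 0"
    using continuous_at_avoid[of x f 0] assms(4) by blast
  obtain e' where e': "e' > 0" "ball x e' \<subseteq> S" using assms(2,3) open_contains_ball by blast
  have "ball x (min e e') \<subseteq> S" using e' by auto
  moreover have "f w \<noteq> 0" if "w \<in> ball x (min e e')" for w using e that by simp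
  ultimately show ?thesis using that[of "min e e'"] e e' by simp
qed

lemma holomorphic_local_factorization:
  assumes f: "f holomorphic_on S" and S: "open S" "connected S" and \<alpha>: "\<alpha> \<in> S"
    and nz: "\<exists>w\<in>S. f w \<noteq> 0"
  obtains m r g where "0 < r" "ball \<alpha> r \<subseteq> S" "g holomorphic_on ball \<alpha> r"
    "\<And>w. w \<in> ball \<alpha> r \<Longrightarrow> f w = (w - \<alpha>)^m * g w"
    "\<And>w. w \<in> ball \<alpha> r \<Longrightarrow> g w \<noteq> 0"
proof (cases "f \<alpha> = 0")
  case True
  have "\<not> f constant_on S"
  proof
    assume "f constant_on S"
    then obtain c where "\<And>x. x \<in> S \<Longrightarrow> f x = c" unfolding constant_on_def by blast
    from nz obtain w where "w \<in> S" "f w \<noteq> 0" by blast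
    then show False using \<open>\<And>x. x \<in> S \<Longrightarrow> f x = c\<close>[OF \<alpha>] \<open>\<And>x. x \<in> S \<Longrightarrow> f x = c\<close>[of w] True by simp
  qed
  show ?thesis
    by (rule holomorphic_factor_zero_nonconstant[OF f S \<alpha> True \<open>\<not> f constant_on S\<close>])
      (rule that, assumption+)
next
  case False
  obtain r where r: "r > 0" "ball \<alpha> r \<subseteq> S" "\<And>w. w \<in> ball \<alpha> r \<Longrightarrow> f w \<noteq> 0"
    using nonvanishing_ball[OF holomorphic_on_imp_continuous_on[OF f] S(1) \<alpha> False] by blast
  show ?thesis
    by (rule that[of r f 0]) (use r holomorphic_on_subset[OF f r(2)] in auto)
qed

lemma zorder_local_factor:
  assumes "r > 0" "g holomorphic_on ball \<alpha> r" "g \<alpha> \<noteq> 0"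
    and eq: "\<And>w. w \<in> ball \<alpha> r \<Longrightarrow> f w = (w - \<alpha>)^m * g w"
  shows "zorder f \<alpha> = int m"
proof (rule zorder_eqI[OF open_ball _ assms(2,3)])
  show "\<alpha> \<in> ball \<alpha> r" using assms(1) by simp
  fix w assume "w \<in> ball \<alpha> r" "w \<noteq> \<alpha>"
  then show "f w = g w * (w - \<alpha>) powi int m" using eq by (simp add: power_int_of_nat mult.commute)
qed

lemma local_factor_exponent_unique:
  assumes "r > 0" "g holomorphic_on ball \<alpha> r" "g \<alpha> \<noteq> 0"
    "\<And>w. w \<in> ball \<alpha> r \<Longrightarrow> f w = (w - \<alpha>)^m * g w"
    and "r' > 0" "h holomorphic_on ball \<alpha> r'" "h \<alpha> \<noteq> 0"
    "\<And>w. w \<in> ball \<alpha> r' \<Longrightarrow> f w = (w - \<alpha>)^n * h w"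
  shows "m = n"
  using zorder_local_factor[OF assms(1-4)] zorder_local_factor[OF assms(5-8)] by simp

text \<open>A factorization \<open>f = (w - \<alpha>)^m g\<close> valid on a ball around \<open>\<alpha>\<close> extends to the whole
  domain: away from \<open>\<alpha>\<close> the cofactor is simply \<open>f / (w - \<alpha>)^m\<close>.\<close>
lemma extend_local_factor:
  assumes S: "open S" and f: "f holomorphic_on S" and r: "r > 0" "ball \<alpha> r \<subseteq> S"
    and g: "g holomorphic_on ball \<alpha> r" and eq: "\<And>w. w \<in> ball \<alpha> r \<Longrightarrow> f w = (w - \<alpha>)^m * g w"
  obtains G where "G holomorphic_on S" "\<And>w. w \<in> S \<Longrightarrow> f w = (w - \<alpha>)^m * G w"
    "\<And>w. w \<in> ball \<alpha> r \<Longrightarrow> G w = g w"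
proof -
  define G where "G w = (if w = \<alpha> then g \<alpha> else f w / (w - \<alpha>)^m)" for w
  have Gg: "G w = g w" if "w \<in> ball \<alpha> r" for w
    using eq[OF that] by (auto simp: G_def)
  have "G holomorphic_on ball \<alpha> r"
    using holomorphic_transform[OF g] Gg by metis
  moreover have "G holomorphic_on (S - {\<alpha>})"
  proof -
    have "(\<lambda>w. f w / (w - \<alpha>)^m) holomorphic_on (S - {\<alpha>})"
      by (intro holomorphic_intros holomorphic_on_subset[OF f]) auto
    then show ?thesis by (rule holomorphic_transform) (auto simp: G_def)
  qed
  ultimately have "G holomorphic_on (S - {\<alpha>}) \<union> ball \<alpha> r"
    by (intro holomorphic_on_Un) (use S in auto)
  moreover have "(S - {\<alpha>}) \<union> ball \<alpha> r = S" using r by auto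
  moreover have "f w = (w - \<alpha>)^m * G w" if "w \<in> S" for w
    using eq[of \<alpha>] r by (cases "w = \<alpha>") (auto simp: G_def)
  ultimately show ?thesis using that Gg by auto
qed

lemma zero_mult_ge_iff_local_factor:
  fixes f :: "complex \<Rightarrow> complex"
  assumes f: "f holomorphic_on ball 0 1" and r: "r > 0" "ball \<alpha> r \<subseteq> ball 0 1"
    and g: "g holomorphic_on ball \<alpha> r" "\<And>w. w \<in> ball \<alpha> r \<Longrightarrow> g w \<noteq> 0"
    and eq: "\<And>w. w \<in> ball \<alpha> r \<Longrightarrow> f w = (w - \<alpha>)^m * g w"
  shows "zero_mult_ge f \<alpha> k \<longleftrightarrow> k \<le> m"
proof
  assume "zero_mult_ge f \<alpha> k"
  then obtain G where G: "G holomorphic_on ball 0 1" "\<And>z. z \<in> ball 0 1 \<Longrightarrow> f z = (z - \<alpha>)^k * G z"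
    unfolding zero_mult_ge_def by blast
  have \<alpha>: "\<alpha> \<in> ball 0 1" using r centre_in_ball by blast
  have r2: "\<alpha> + of_real (r / 2) \<in> ball \<alpha> r" "\<alpha> + of_real (r / 2) \<noteq> \<alpha>"
    using r by (auto simp: dist_norm)
  have "f (\<alpha> + of_real (r / 2)) \<noteq> 0" using eq[OF r2(1)] g(2)[OF r2(1)] r2(2) by simp
  then have "G (\<alpha> + of_real (r / 2)) \<noteq> 0" using G(2) r2(1) r(2) by auto
  then have "\<exists>w\<in>ball 0 1. G w \<noteq> 0" using r2 r(2) by blast
  then obtain j r' h where h: "0 < r'" "ball \<alpha> r' \<subseteq> ball 0 1" "h holomorphic_on ball \<alpha> r'"
      "\<And>w. w \<in> ball \<alpha> r' \<Longrightarrow> G w = (w - \<alpha>)^j * h w" "\<And>w. w \<in> ball \<alpha> r' \<Longrightarrow> h w \<noteq> 0"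
    by (rule holomorphic_local_factorization[OF G(1) open_ball connected_ball \<alpha>]) (rule that, assumption+)
  have "m = k + j"
  proof (rule local_factor_exponent_unique[OF r(1) g(1) _ eq h(1,3)])
    show "g \<alpha> \<noteq> 0" "h \<alpha> \<noteq> 0" using g(2) h(5) r(1) h(1) by auto
    fix w assume "w \<in> ball \<alpha> r'"
    then show "f w = (w - \<alpha>)^(k + j) * h w" using G(2) h(2,4) by (auto simp: power_add)
  qed
  then show "k \<le> m" by simp
next
  assume "k \<le> m"
  have hol: "(\<lambda>w. (w - \<alpha>)^(m - k) * g w) holomorphic_on ball \<alpha> r" by (intro holomorphic_intros g(1))
  have eq': "f w = (w - \<alpha>)^k * ((w - \<alpha>)^(m - k) * g w)" if "w \<in> ball \<alpha> r" for w
    using eq[OF that] \<open>k \<le> m\<close> by (simp add: mult.assoc power_add[symmetric])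
  obtain G where "G holomorphic_on ball 0 1" "\<And>w. w \<in> ball 0 1 \<Longrightarrow> f w = (w - \<alpha>)^k * G w"
    by (rule extend_local_factor[OF open_ball f r hol eq'], assumption) (rule that, assumption+)
  then show "zero_mult_ge f \<alpha> k" unfolding zero_mult_ge_def by blast
qed

corollary zero_mult_eq_iff_local_factor:
  fixes f :: "complex \<Rightarrow> complex"
  assumes "f holomorphic_on ball 0 1" "r > 0" "ball \<alpha> r \<subseteq> ball 0 1"
    "g holomorphic_on ball \<alpha> r" "\<And>w. w \<in> ball \<alpha> r \<Longrightarrow> g w \<noteq> 0"
    "\<And>w. w \<in> ball \<alpha> r \<Longrightarrow> f w = (w - \<alpha>)^m * g w"
  shows "zero_mult_eq f \<alpha> n \<longleftrightarrow> n = m"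
  using zero_mult_ge_iff_local_factor[OF assms] unfolding zero_mult_eq_def by auto

lemma zero_mult_ge_if_vanishing:
  assumes "\<And>z. z \<in> ball 0 1 \<Longrightarrow> f z = 0"
  shows "zero_mult_ge f \<alpha> k"
  unfolding zero_mult_ge_def using assms by (intro exI[of _ "\<lambda>_. 0"]) auto

lemma even_order_of_square:
  fixes d u :: "complex \<Rightarrow> complex"
  assumes r: "r > 0" and d: "d holomorphic_on ball \<alpha> r" and u: "u holomorphic_on ball \<alpha> r"
    and u0: "u \<alpha> \<noteq> 0" and eq: "\<And>z. z \<in> ball \<alpha> r \<Longrightarrow> (d z)^2 = (z - \<alpha>)^n * u z"
  shows "even n"
proof -
  have \<alpha>: "\<alpha> \<in> ball \<alpha> r" using r by simp
  obtain \<rho> where \<rho>: "\<rho> > 0" "ball \<alpha> \<rho> \<subseteq> ball \<alpha> r" "\<And>w. w \<in> ball \<alpha> \<rho> \<Longrightarrow> u w \<noteq> 0"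
    using nonvanishing_ball[OF holomorphic_on_imp_continuous_on[OF u] open_ball \<alpha> u0] by blast
  define w0 where "w0 = \<alpha> + of_real (\<rho> / 2)"
  have w0: "w0 \<in> ball \<alpha> \<rho>" "w0 \<noteq> \<alpha>" using \<rho> by (auto simp: w0_def dist_norm)
  have "d w0 \<noteq> 0" using eq[of w0] \<rho>(2,3) w0 by auto
  then have "\<exists>w\<in>ball \<alpha> r. d w \<noteq> 0" using w0(1) \<rho>(2) by blast
  then obtain j r' g where g: "0 < r'" "ball \<alpha> r' \<subseteq> ball \<alpha> r" "g holomorphic_on ball \<alpha> r'"
      "\<And>w. w \<in> ball \<alpha> r' \<Longrightarrow> d w = (w - \<alpha>)^j * g w" "\<And>w. w \<in> ball \<alpha> r' \<Longrightarrow> g w \<noteq> 0"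
    by (rule holomorphic_local_factorization[OF d open_ball connected_ball \<alpha>]) (rule that, assumption+)
  have "n = 2 * j"
  proof (rule local_factor_exponent_unique[of \<rho> u \<alpha> "\<lambda>w. (d w)^2" n r' "\<lambda>w. (g w)^2"])
    show "u holomorphic_on ball \<alpha> \<rho>" using u \<rho>(2) by (rule holomorphic_on_subset)
    show "(\<lambda>w. (g w)^2) holomorphic_on ball \<alpha> r'" using g(3) by (intro holomorphic_intros)
    show "(g \<alpha>)^2 \<noteq> 0" using g(1,5) by simp
    fix w assume "w \<in> ball \<alpha> r'"
    then show "(d w)^2 = (w - \<alpha>)^(2 * j) * (g w)^2"
      using g(4) by (simp add: power_mult_distrib power_mult[symmetric] mult.commute)
  qed (use \<rho> g(1) u0 eq in auto)
  then show ?thesis by simp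
qed

text \<open>Conversely, a zero of even order is locally a square, since the nonvanishing
  cofactor has a holomorphic square root on a ball.\<close>
lemma square_root_of_even_local_factor:
  fixes u :: "complex \<Rightarrow> complex"
  assumes u: "u holomorphic_on ball \<alpha> r" "\<And>w. w \<in> ball \<alpha> r \<Longrightarrow> u w \<noteq> 0" and k: "even k"
  obtains J where "J holomorphic_on ball \<alpha> r" "\<And>w. w \<in> ball \<alpha> r \<Longrightarrow> (w - \<alpha>)^k * u w = (J w)^2"
proof -
  obtain v where v: "v holomorphic_on ball \<alpha> r" "\<And>w. w \<in> ball \<alpha> r \<Longrightarrow> u w = (v w)^2"
    using contractible_imp_holomorphic_sqrt[OF u(1) convex_imp_contractible[OF convex_ball] u(2)] by blast
  show ?thesis
  proof (rule that[of "\<lambda>w. (w - \<alpha>)^(k div 2) * v w"])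
    show "(\<lambda>w. (w - \<alpha>)^(k div 2) * v w) holomorphic_on ball \<alpha> r" by (intro holomorphic_intros v(1))
    fix w assume "w \<in> ball \<alpha> r"
    have "((w - \<alpha>)^(k div 2) * v w)^2 = (w - \<alpha>)^(2 * (k div 2)) * (v w)^2"
      by (simp add: power_mult_distrib power_mult[symmetric] mult.commute)
    also have "2 * (k div 2) = k" using k by simp
    finally show "(w - \<alpha>)^k * u w = ((w - \<alpha>)^(k div 2) * v w)^2" using v(2)[OF \<open>w \<in> ball \<alpha> r\<close>] by simp
  qed
qed

text \<open>If no odd order \<open>n\<close> of
  \<open>q\<close> at \<open>\<alpha>\<close> is exceeded by the order of \<open>a\<close>, then near \<open>\<alpha>\<close> the function \<open>q\<close> is a square modulo
  \<open>a\<close>: either \<open>q\<close> has even order (and is a square), or \<open>a\<close> has order at most that of \<open>q\<close>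
  (and divides \<open>q\<close>).\<close>
lemma local_square_root_mod:
  fixes a q :: "complex \<Rightarrow> complex"
  assumes a: "a holomorphic_on ball 0 1" and q: "q holomorphic_on ball 0 1" and \<alpha>: "\<alpha> \<in> ball 0 1"
    and no_obstruction: "\<not> (\<exists>n. odd n \<and> zero_mult_eq q \<alpha> n \<and> zero_mult_ge a \<alpha> (Suc n))"
  obtains \<rho> J v where "\<rho> > 0" "ball \<alpha> \<rho> \<subseteq> ball 0 1"
    "J holomorphic_on ball \<alpha> \<rho>" "v holomorphic_on ball \<alpha> \<rho>"
    "\<And>z. z \<in> ball \<alpha> \<rho> \<Longrightarrow> q z - (J z)^2 = a z * v z"
proof (cases "\<exists>w\<in>ball 0 1. q w \<noteq> 0")
  case False
  have "ball \<alpha> (1 - norm \<alpha>) \<subseteq> ball 0 1"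
    by (simp add: ball_subset_ball_iff)
  then show ?thesis
    using False \<alpha> by (intro that[of "1 - norm \<alpha>" "\<lambda>_. 0" "\<lambda>_. 0"]) auto
next
  case True
  obtain k r u where u: "0 < r" "ball \<alpha> r \<subseteq> ball 0 1" "u holomorphic_on ball \<alpha> r"
      "\<And>w. w \<in> ball \<alpha> r \<Longrightarrow> q w = (w - \<alpha>)^k * u w" "\<And>w. w \<in> ball \<alpha> r \<Longrightarrow> u w \<noteq> 0"
    by (rule holomorphic_local_factorization[OF q open_ball connected_ball \<alpha> True]) (rule that, assumption+)
  show ?thesis
  proof (cases "even k")
    case True
    obtain J where "J holomorphic_on ball \<alpha> r" "\<And>w. w \<in> ball \<alpha> r \<Longrightarrow> (w - \<alpha>)^k * u w = (J w)^2"
      using square_root_of_even_local_factor[OF u(3,5) True] by blast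
    then show ?thesis using u by (intro that[of r J "\<lambda>_. 0"]) auto
  next
    case False
    have "zero_mult_eq q \<alpha> k"
      using zero_mult_eq_iff_local_factor[OF q u(1,2,3,5,4)] by simp
    then have a_low: "\<not> zero_mult_ge a \<alpha> (Suc k)" using no_obstruction False by blast
    then have "\<exists>w\<in>ball 0 1. a w \<noteq> 0" using zero_mult_ge_if_vanishing by blast
    then obtain m r' A where A: "0 < r'" "ball \<alpha> r' \<subseteq> ball 0 1" "A holomorphic_on ball \<alpha> r'"
        "\<And>w. w \<in> ball \<alpha> r' \<Longrightarrow> a w = (w - \<alpha>)^m * A w" "\<And>w. w \<in> ball \<alpha> r' \<Longrightarrow> A w \<noteq> 0"
      by (rule holomorphic_local_factorization[OF a open_ball connected_ball \<alpha>]) (rule that, assumption+)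
    have "m \<le> k" using a_low zero_mult_ge_iff_local_factor[OF a A(1,2,3,5,4)] by simp
    define \<rho> where "\<rho> = min r r'"
    have \<rho>: "\<rho> > 0" "ball \<alpha> \<rho> \<subseteq> ball \<alpha> r" "ball \<alpha> \<rho> \<subseteq> ball \<alpha> r'"
      using u(1) A(1) by (auto simp: \<rho>_def)
    define v where "v w = (w - \<alpha>)^(k - m) * u w / A w" for w
    have "v holomorphic_on ball \<alpha> \<rho>"
      unfolding v_def using \<rho> A(5)
      by (intro holomorphic_intros holomorphic_on_subset[OF u(3)] holomorphic_on_subset[OF A(3)]) auto
    moreover have "q w - 0^2 = a w * v w" if "w \<in> ball \<alpha> \<rho>" for w
    proof -
      have w: "w \<in> ball \<alpha> r" "w \<in> ball \<alpha> r'" using that \<rho> by auto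
      have "a w * v w = (w - \<alpha>)^m * (w - \<alpha>)^(k - m) * u w" using A(4,5)[OF w(2)] by (simp add: v_def)
      also have "\<dots> = q w" using u(4)[OF w(1)] \<open>m \<le> k\<close> by (simp add: power_add[symmetric])
      finally show ?thesis by simp
    qed
    ultimately show ?thesis using \<rho> u(2) by (intro that[of \<rho> "\<lambda>_. 0" v]) auto
  qed
qed

lemma zeros_finite_in_compact:
  fixes f :: "complex \<Rightarrow> complex"
  assumes f: "f holomorphic_on S" and S: "open S" "connected S" and nz: "\<exists>w\<in>S. f w \<noteq> 0"
    and K: "compact K" "K \<subseteq> S"
  shows "finite {z \<in> K. f z = 0}"
proof (cases "f constant_on S")
  case True
  then obtain c where "\<And>x. x \<in> S \<Longrightarrow> f x = c" unfolding constant_on_def by blast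
  then have "{z \<in> K. f z = 0} = {}" using nz K(2) by force
  then show ?thesis by (metis finite.emptyI)
qed (rule holomorphic_compact_finite_zeros[OF f S K])

lemma zeros_countable:
  fixes f :: "complex \<Rightarrow> complex"
  assumes f: "f holomorphic_on S" and S: "open S" "connected S" and nz: "\<exists>w\<in>S. f w \<noteq> 0"
  shows "countable {z \<in> S. f z = 0}"
proof -
  obtain C where C: "\<And>n. compact (C n)" "\<And>n. C n \<subseteq> S" "\<And>n. C n \<subseteq> interior (C (Suc n))"
      "\<Union>(range C) = S" "\<And>K. compact K \<Longrightarrow> K \<subseteq> S \<Longrightarrow> \<exists>N. \<forall>n\<ge>N. K \<subseteq> C n"
    by (rule open_Union_compact_subsets[OF S(1)]) (rule that, assumption+)
  have "{z \<in> S. f z = 0} = (\<Union>n. {z \<in> C n. f z = 0})" using C(4) by blast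
  moreover have "finite {z \<in> C n. f z = 0}" for n
    by (rule zeros_finite_in_compact[OF f S nz C(1,2)])
  ultimately show ?thesis by (simp add: countable_finite)
qed

lemma isolated_zero_ball:
  fixes a :: "complex \<Rightarrow> complex"
  assumes a: "a holomorphic_on S" and S: "open S" "connected S" and \<alpha>: "\<alpha> \<in> S"
    and nz: "\<exists>w\<in>S. a w \<noteq> 0"
  obtains \<delta> where "\<delta> > 0" "\<And>w. w \<in> ball \<alpha> \<delta> \<Longrightarrow> w \<noteq> \<alpha> \<Longrightarrow> a w \<noteq> 0"
proof -
  obtain \<beta> where "\<beta> \<in> S" "a \<beta> \<noteq> 0" using nz by blast
  then have "eventually (\<lambda>w. a w \<noteq> 0 \<and> w \<in> S) (at \<alpha>)"
    by (rule non_zero_neighbour_alt[OF a S \<alpha>])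
  then have "\<exists>\<delta>>0. \<forall>w. w \<noteq> \<alpha> \<and> dist w \<alpha> < \<delta> \<longrightarrow> a w \<noteq> 0 \<and> w \<in> S"
    unfolding eventually_at by simp
  then show ?thesis using that by (auto simp: dist_commute)
qed

lemma quotient_limit_at_isolated_zero:
  fixes a c f :: "complex \<Rightarrow> complex"
  assumes \<rho>: "\<rho> > 0" and c: "c holomorphic_on ball \<alpha> \<rho>"
    and eq: "\<And>z. z \<in> ball \<alpha> \<rho> \<Longrightarrow> f z = a z * c z"
    and a_nz: "\<And>w. w \<in> ball \<alpha> \<rho> \<Longrightarrow> w \<noteq> \<alpha> \<Longrightarrow> a w \<noteq> 0"
  shows "((\<lambda>w. f w / a w) \<longlongrightarrow> c \<alpha>) (at \<alpha>)"
proof -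
  have near_\<alpha>: "eventually (\<lambda>w. w \<in> ball \<alpha> \<rho> - {\<alpha>}) (at \<alpha>)"
    using \<rho> by (intro eventually_at_in_open) auto
  have "isCont c \<alpha>"
    using holomorphic_on_imp_continuous_on[OF c] \<rho>
      continuous_on_eq_continuous_at[of "ball \<alpha> \<rho>" c] by simp
  moreover have "eventually (\<lambda>w. c w = f w / a w) (at \<alpha>)"
    using near_\<alpha> by eventually_elim (use a_nz eq in auto)
  ultimately show ?thesis
    unfolding isCont_def by (rule Lim_transform_eventually)
qed

text \<open>At a zero \<open>\<alpha>\<close> the quotient is recovered as the limit of \<open>f / a\<close>.\<close>
lemma divisible_if_locally_divisible:
  fixes a f :: "complex \<Rightarrow> complex"
  assumes S: "open S" "connected S" and a: "a holomorphic_on S" and f: "f holomorphic_on S"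
    and nz: "\<exists>w\<in>S. a w \<noteq> 0"
    and loc: "\<And>\<alpha>. \<alpha> \<in> S \<Longrightarrow> a \<alpha> = 0 \<Longrightarrow>
       \<exists>\<rho>>0. \<exists>c. c holomorphic_on ball \<alpha> \<rho> \<and> (\<forall>z\<in>ball \<alpha> \<rho>. f z = a z * c z)"
  obtains b where "b holomorphic_on S" "\<And>z. z \<in> S \<Longrightarrow> f z = a z * b z"
proof -
  define b where "b z = (if a z \<noteq> 0 then f z / a z else Lim (at z) (\<lambda>w. f w / a w))" for z
  have b_local: "\<exists>\<rho>>0. \<exists>c. c holomorphic_on ball \<alpha> \<rho> \<and> (\<forall>z\<in>ball \<alpha> \<rho>. f z = a z * c z \<and> b z = c z)"
    if \<alpha>: "\<alpha> \<in> S" for \<alpha>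
  proof (cases "a \<alpha> = 0")
    case False
    obtain \<rho> where \<rho>: "\<rho> > 0" "ball \<alpha> \<rho> \<subseteq> S" "\<And>w. w \<in> ball \<alpha> \<rho> \<Longrightarrow> a w \<noteq> 0"
      using nonvanishing_ball[OF holomorphic_on_imp_continuous_on[OF a] S(1) \<alpha> False] by blast
    have "(\<lambda>z. f z / a z) holomorphic_on ball \<alpha> \<rho>"
      using \<rho> by (intro holomorphic_intros holomorphic_on_subset[OF f] holomorphic_on_subset[OF a]) auto
    then show ?thesis using \<rho> by (intro exI[of _ \<rho>] exI[of _ "\<lambda>z. f z / a z"]) (auto simp: b_def)
  next
    case True
    obtain \<rho>1 c where c: "\<rho>1 > 0" "c holomorphic_on ball \<alpha> \<rho>1" "\<And>z. z \<in> ball \<alpha> \<rho>1 \<Longrightarrow> f z = a z * c z"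
      using loc[OF \<alpha> True] by blast
    obtain \<delta> where \<delta>: "\<delta> > 0" "\<And>w. w \<in> ball \<alpha> \<delta> \<Longrightarrow> w \<noteq> \<alpha> \<Longrightarrow> a w \<noteq> 0"
      by (rule isolated_zero_ball[OF a S \<alpha> nz]) (assumption | rule that)+
    define \<rho> where "\<rho> = min \<rho>1 \<delta>"
    have \<rho>: "\<rho> > 0" "ball \<alpha> \<rho> \<subseteq> ball \<alpha> \<rho>1" "ball \<alpha> \<rho> \<subseteq> ball \<alpha> \<delta>"
      using c(1) \<delta>(1) by (auto simp: \<rho>_def)
    have "((\<lambda>w. f w / a w) \<longlongrightarrow> c \<alpha>) (at \<alpha>)"
      using \<rho> c \<delta>(2) by (intro quotient_limit_at_isolated_zero[of \<rho>]) (auto intro: holomorphic_on_subset)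
    then have "b \<alpha> = c \<alpha>" using True by (simp add: b_def tendsto_Lim)
    then have "b z = c z" if "z \<in> ball \<alpha> \<rho>" for z
      using that \<delta>(2)[of z] c(3)[of z] \<rho> by (cases "z = \<alpha>") (auto simp: b_def)
    then show ?thesis
      using \<rho> c(3) holomorphic_on_subset[OF c(2) \<rho>(2)] by blast
  qed
  have "b holomorphic_on S"
    unfolding analytic_on_open[OF S(1), symmetric] analytic_on_def
  proof
    fix x assume "x \<in> S"
    then obtain \<rho> c where "\<rho> > 0" "c holomorphic_on ball x \<rho>" "\<forall>z\<in>ball x \<rho>. b z = c z"
      using b_local by blast
    then show "\<exists>\<rho>>0. b holomorphic_on ball x \<rho>" using holomorphic_transform by metis
  qed
  moreover have "f z = a z * b z" if z: "z \<in> S" for z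
  proof -
    obtain \<rho> c where "\<rho> > 0" "\<forall>w\<in>ball z \<rho>. f w = a w * c w \<and> b w = c w"
      using b_local[OF z] by blast
    then show ?thesis by simp
  qed
  ultimately show ?thesis by (rule that)
qed

lemma holomorphic_on_disc_uniform_limit:
  assumes S: "open S" "S \<subseteq> ball 0 1" and F: "\<And>N. F N holomorphic_on S"
    and lim: "\<And>R. 0 \<le> R \<Longrightarrow> R < 1 \<Longrightarrow> uniform_limit (cball 0 R) F f sequentially"
  shows "f holomorphic_on S"
proof (rule holomorphic_uniform_sequence[OF S(1) F])
  fix x assume "x \<in> S"
  then obtain e where e: "e > 0" "cball x e \<subseteq> S" using S(1) open_contains_cball by blast
  then have "cball x e \<subseteq> ball 0 1" using S(2) by blast
  then have R: "0 \<le> norm x + e" "norm x + e < 1"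
    using e(1) by (auto simp: cball_subset_ball_iff dist_norm)
  have "cball x e \<subseteq> cball 0 (norm x + e)"
    by (simp add: cball_subset_cball_iff dist_norm)
  then show "\<exists>d>0. cball x d \<subseteq> S \<and> uniform_limit (cball x d) F f sequentially"
    using e uniform_limit_on_subset[OF lim[OF R]] by blast
qed

lemma holomorphic_taylor_split:
  fixes G :: "complex \<Rightarrow> complex"
  assumes G: "G holomorphic_on ball \<alpha> r"
  defines "c \<equiv> (\<lambda>n. (deriv ^^ n) G \<alpha> / fact n)"
  obtains R where "R holomorphic_on ball \<alpha> r"
    "\<And>z. z \<in> ball \<alpha> r \<Longrightarrow> G z = (\<Sum>n<m. c n * (z - \<alpha>)^n) + (z - \<alpha>)^m * R z"
proof -
  define R where "R z = (\<Sum>n. c (n + m) * (z - \<alpha>)^n)" for z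
  have series: "(\<lambda>n. c n * (z - \<alpha>)^n) sums G z" if "z \<in> ball \<alpha> r" for z
    using holomorphic_power_series[OF G that] by (simp add: c_def)
  have tail: "(\<lambda>n. c (n + m) * (z - \<alpha>)^(n + m)) sums (G z - (\<Sum>n<m. c n * (z - \<alpha>)^n))"
    if "z \<in> ball \<alpha> r" for z
    using sums_split_initial_segment[OF series[OF that], of m] by simp
  have R_sums: "(\<lambda>n. c (n + m) * (z - \<alpha>)^n) sums R z" if z: "z \<in> ball \<alpha> r" for z
  proof (cases "z = \<alpha>")
    case True
    have "(\<lambda>n. c (n + m) * 0^n) sums c (0 + m)" by (rule powser_sums_zero)
    then show ?thesis using True by (simp add: R_def sums_iff)
  next
    case False
    have "(\<lambda>n. inverse ((z - \<alpha>)^m) * (c (n + m) * (z - \<alpha>)^(n + m))) sums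
        (inverse ((z - \<alpha>)^m) * (G z - (\<Sum>n<m. c n * (z - \<alpha>)^n)))"
      by (rule sums_mult[OF tail[OF z]])
    moreover have "inverse ((z - \<alpha>)^m) * (c (n + m) * (z - \<alpha>)^(n + m)) = c (n + m) * (z - \<alpha>)^n" for n
      using False by (simp add: power_add field_simps)
    ultimately show ?thesis by (simp add: R_def sums_iff)
  qed
  show ?thesis
  proof
    show "R holomorphic_on ball \<alpha> r"
      by (rule power_series_holomorphic[of _ _ "\<lambda>n. c (n + m)"]) (use R_sums in auto)
    fix z assume z: "z \<in> ball \<alpha> r"
    have "(\<lambda>n. (z - \<alpha>)^m * (c (n + m) * (z - \<alpha>)^n)) sums ((z - \<alpha>)^m * R z)"
      by (rule sums_mult[OF R_sums[OF z]])
    moreover have "(z - \<alpha>)^m * (c (n + m) * (z - \<alpha>)^n) = c (n + m) * (z - \<alpha>)^(n + m)" for n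
      by (simp add: power_add mult_ac)
    ultimately have "(\<lambda>n. c (n + m) * (z - \<alpha>)^(n + m)) sums ((z - \<alpha>)^m * R z)" by simp
    with tail[OF z] have "G z - (\<Sum>n<m. c n * (z - \<alpha>)^n) = (z - \<alpha>)^m * R z"
      using sums_unique2 by blast
    then show "G z = (\<Sum>n<m. c n * (z - \<alpha>)^n) + (z - \<alpha>)^m * R z" by (simp add: algebra_simps)
  qed
qed

text \<open>When \<open>a = (z - \<alpha>)^m A\<close>, this says \<open>J \<equiv> a \<cdot> (P / (z - \<alpha>)^m)\<close> modulo \<open>a\<close>.\<close>
lemma principal_part_split:
  fixes A J :: "complex \<Rightarrow> complex"
  assumes A: "A holomorphic_on ball \<alpha> r" "\<And>z. z \<in> ball \<alpha> r \<Longrightarrow> A z \<noteq> 0"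
    and J: "J holomorphic_on ball \<alpha> r"
  obtains P R where "P holomorphic_on UNIV" "R holomorphic_on ball \<alpha> r"
    "\<And>z. z \<in> ball \<alpha> r \<Longrightarrow> J z = A z * P z + (z - \<alpha>)^m * A z * R z"
proof -
  define G where "G z = J z / A z" for z
  have G_hol: "G holomorphic_on ball \<alpha> r" unfolding G_def using A J by (intro holomorphic_intros) auto
  obtain R where R: "R holomorphic_on ball \<alpha> r"
      "\<And>z. z \<in> ball \<alpha> r \<Longrightarrow> G z = (\<Sum>n<m. (deriv ^^ n) G \<alpha> / fact n * (z - \<alpha>)^n) + (z - \<alpha>)^m * R z"
    using holomorphic_taylor_split[OF G_hol, of m] by blast
  show ?thesis
  proof (rule that[OF _ R(1)])
    show "(\<lambda>z. \<Sum>n<m. (deriv ^^ n) G \<alpha> / fact n * (z - \<alpha>)^n) holomorphic_on UNIV"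
      by (intro holomorphic_intros)
    fix z assume z: "z \<in> ball \<alpha> r"
    have "J z = A z * G z" using A(2)[OF z] by (simp add: G_def)
    also have "\<dots> = A z * (\<Sum>n<m. (deriv ^^ n) G \<alpha> / fact n * (z - \<alpha>)^n) + (z - \<alpha>)^m * A z * R z"
      using R(2)[OF z] by (simp add: algebra_simps)
    finally show "J z = A z * (\<Sum>n<m. (deriv ^^ n) G \<alpha> / fact n * (z - \<alpha>)^n) + (z - \<alpha>)^m * A z * R z" .
  qed
qed

lemma polynomial_approximation_on_cball:
  fixes f :: "complex \<Rightarrow> complex"
  assumes f: "f holomorphic_on ball 0 R" and r: "0 \<le> r" "r < R" and e: "e > 0"
  obtains T where "T holomorphic_on UNIV" "\<And>z. z \<in> cball 0 r \<Longrightarrow> norm (f z - T z) \<le> e"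
proof -
  define c where "c n = (deriv ^^ n) f 0 / fact n" for n
  have series: "(\<lambda>n. c n * z^n) sums f z" if "z \<in> ball 0 R" for z
    using holomorphic_power_series[OF f that] by (simp add: c_def)
  define t where "t = (r + R) / 2"
  have t: "r < t" "t < R" using r by (auto simp: t_def)
  then have "complex_of_real t \<in> ball 0 R" using r by simp
  then have "summable (\<lambda>n. c n * (complex_of_real t)^n)"
    using series sums_summable by blast
  then have "ereal (norm (complex_of_real t)) \<le> conv_radius c" by (rule conv_radius_geI)
  then have t_le: "ereal t \<le> conv_radius c" using r t by simp
  have "ereal r < ereal t" using t by simp
  then have "ereal r < conv_radius c" using t_le by (rule less_le_trans)
  then have "uniform_limit (cball 0 r) (\<lambda>n x. \<Sum>i<n. c i * (x - 0)^i)
      (\<lambda>x. suminf (\<lambda>i. c i * (x - 0)^i)) sequentially"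
    by (rule powser_uniform_limit)
  from uniform_limitD[OF this e] obtain N where
    N: "\<forall>x\<in>cball 0 r. dist (\<Sum>i<N. c i * (x - 0)^i) (suminf (\<lambda>i. c i * (x - 0)^i)) < e"
    by (auto simp: eventually_sequentially)
  show ?thesis
  proof (rule that[of "\<lambda>x. \<Sum>i<N. c i * x^i"])
    show "(\<lambda>x. \<Sum>i<N. c i * x^i) holomorphic_on UNIV" by (intro holomorphic_intros)
    fix z :: complex assume z: "z \<in> cball 0 r"
    then have "suminf (\<lambda>i. c i * (z - 0)^i) = f z" using series[of z] r by (simp add: sums_iff)
    moreover have "dist (\<Sum>i<N. c i * (z - 0)^i) (suminf (\<lambda>i. c i * (z - 0)^i)) < e"
      using N z by blast
    ultimately show "norm (f z - (\<Sum>i<N. c i * z^i)) \<le> e"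
      by (simp add: dist_norm norm_minus_commute)
  qed
qed

text \<open>We construct \<open>d\<close> holomorphic on the disc with
  \<open>d \<equiv> A\<^sub>\<alpha> P\<^sub>\<alpha>\<close> modulo \<open>a\<close> near every \<open>\<alpha>\<close>: enumerating the zeros as \<open>\<alpha>\<^sub>n\<close>, set
  \<open>d = \<Sum>\<^sub>n a (F\<^sub>n - T\<^sub>n)\<close>, where \<open>F\<^sub>n = P\<^sub>n / (z - \<alpha>\<^sub>n)^{m}\<close> is the principal part and the
  polynomial \<open>T\<^sub>n\<close> approximates it within \<open>2^{-n}\<close> on \<open>cball 0 \<bar>\<alpha>\<^sub>n\<bar>\<^sup>2\<close>, which makes the series
  converge locally uniformly.\<close>
locale disc_interpolation =
  fixes a :: "complex \<Rightarrow> complex" and m :: "complex \<Rightarrow> nat" and r :: "complex \<Rightarrow> real"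
    and A P :: "complex \<Rightarrow> complex \<Rightarrow> complex"
  assumes a_hol: "a holomorphic_on ball 0 1" and a_nz: "\<exists>w\<in>ball 0 1. a w \<noteq> 0"
    and A_hol: "\<And>\<alpha>. \<alpha> \<in> ball 0 1 \<Longrightarrow> a \<alpha> = 0 \<Longrightarrow> A \<alpha> holomorphic_on ball 0 1"
    and factor: "\<And>\<alpha> z. \<alpha> \<in> ball 0 1 \<Longrightarrow> a \<alpha> = 0 \<Longrightarrow> z \<in> ball 0 1 \<Longrightarrow> a z = (z - \<alpha>)^(m \<alpha>) * A \<alpha> z"
    and r_pos: "\<And>\<alpha>. \<alpha> \<in> ball 0 1 \<Longrightarrow> a \<alpha> = 0 \<Longrightarrow> 0 < r \<alpha> \<and> ball \<alpha> (r \<alpha>) \<subseteq> ball 0 1"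
    and A_nz: "\<And>\<alpha> z. \<alpha> \<in> ball 0 1 \<Longrightarrow> a \<alpha> = 0 \<Longrightarrow> z \<in> ball \<alpha> (r \<alpha>) \<Longrightarrow> A \<alpha> z \<noteq> 0"
    and P_hol: "\<And>\<alpha>. \<alpha> \<in> ball 0 1 \<Longrightarrow> a \<alpha> = 0 \<Longrightarrow> P \<alpha> holomorphic_on UNIV"
begin

definition "Z = {z \<in> ball 0 1. a z = 0}"

definition "idx = to_nat_on Z"
definition "zero n = inv_into Z idx n"
definition "I = idx ` Z"

lemma Z_iff: "\<alpha> \<in> Z \<longleftrightarrow> \<alpha> \<in> ball 0 1 \<and> a \<alpha> = 0"
  by (simp add: Z_def)

lemma zero_in_Z: "n \<in> I \<Longrightarrow> zero n \<in> Z"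
  unfolding zero_def I_def by (auto intro: inv_into_into)

lemma idx_zero: "n \<in> I \<Longrightarrow> idx (zero n) = n"
  unfolding zero_def I_def by (rule f_inv_into_f)

lemma zero_idx: "\<alpha> \<in> Z \<Longrightarrow> zero (idx \<alpha>) = \<alpha> \<and> idx \<alpha> \<in> I"
proof -
  have "countable Z" unfolding Z_def by (rule zeros_countable[OF a_hol open_ball connected_ball a_nz])
  then have "inj_on idx Z" unfolding idx_def by blast
  then show "\<alpha> \<in> Z \<Longrightarrow> zero (idx \<alpha>) = \<alpha> \<and> idx \<alpha> \<in> I" by (simp add: zero_def I_def)
qed

lemma isolated_zero:
  assumes "\<alpha> \<in> Z" "z \<in> ball \<alpha> (r \<alpha>)" "z \<noteq> \<alpha>"
  shows "a z \<noteq> 0"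
  using assms r_pos[of \<alpha>] factor[of \<alpha> z] A_nz[of \<alpha> z] by (auto simp: Z_iff)

lemma eventually_far_out:
  assumes R: "0 \<le> R" "R < 1"
  shows "eventually (\<lambda>n. n \<in> I \<longrightarrow> zero n \<noteq> 0 \<and> R < norm (zero n)^2) sequentially"
proof -
  define B where "B = {n\<in>I. \<not> (zero n \<noteq> 0 \<and> R < norm (zero n)^2)}"
  have "B \<subseteq> idx ` {z \<in> cball 0 (sqrt R). a z = 0}"
  proof
    fix n assume "n \<in> B"
    then have n: "n \<in> I" "zero n = 0 \<or> norm (zero n)^2 \<le> R" by (auto simp: B_def)
    then have "norm (zero n) \<le> sqrt R" using R by (auto intro: real_le_rsqrt)
    then have "zero n \<in> {z \<in> cball 0 (sqrt R). a z = 0}" using zero_in_Z[OF n(1)] by (simp add: Z_iff)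
    then show "n \<in> idx ` {z \<in> cball 0 (sqrt R). a z = 0}" using idx_zero[OF n(1)] by force
  qed
  moreover have "sqrt R < 1" using R by simp
  then have "finite {z \<in> cball 0 (sqrt R). a z = 0}"
    by (intro zeros_finite_in_compact[OF a_hol open_ball connected_ball a_nz])
      (simp_all add: cball_subset_ball_iff)
  ultimately have "finite B" using finite_subset by blast
  then obtain k where "B \<subseteq> {..<k}" using finite_nat_bounded by blast
  then have "\<forall>n\<ge>k. n \<notin> B" by auto
  then show ?thesis unfolding eventually_sequentially B_def by blast
qed

definition "F \<alpha> z = P \<alpha> z / (z - \<alpha>)^(m \<alpha>)"

lemma F_hol: "\<alpha> \<in> Z \<Longrightarrow> F \<alpha> holomorphic_on (S - {\<alpha>})"
  unfolding F_def Z_iff by (intro holomorphic_intros holomorphic_on_subset[OF P_hol]) auto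

lemma a_F: "\<alpha> \<in> Z \<Longrightarrow> z \<in> ball 0 1 \<Longrightarrow> z \<noteq> \<alpha> \<Longrightarrow> a z * F \<alpha> z = A \<alpha> z * P \<alpha> z"
  using factor[of \<alpha> z] by (simp add: F_def Z_iff)

lemma approximant_exists:
  assumes "n \<in> I" "zero n \<noteq> 0"
  shows "\<exists>T. T holomorphic_on UNIV \<and>
    (\<forall>z\<in>cball 0 (norm (zero n)^2). norm (F (zero n) z - T z) \<le> (1/2)^n)"
proof -
  have n1: "norm (zero n) < 1" using zero_in_Z[OF assms(1)] by (simp add: Z_iff)
  have "F (zero n) holomorphic_on (ball 0 (norm (zero n)) - {zero n})"
    by (rule F_hol[OF zero_in_Z[OF assms(1)]])
  moreover have "ball 0 (norm (zero n)) - {zero n} = ball 0 (norm (zero n))" by auto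
  moreover have "norm (zero n)^2 < norm (zero n)"
    using assms(2) n1 by (simp add: power2_eq_square)
  ultimately show ?thesis
    using polynomial_approximation_on_cball[of "F (zero n)" "norm (zero n)" "norm (zero n)^2" "(1/2)^n"]
    by (metis zero_le_power2 zero_less_divide_1_iff zero_less_numeral zero_less_power)
qed

definition "T n = (if n \<in> I \<and> zero n \<noteq> 0 then (SOME T. T holomorphic_on UNIV \<and>
   (\<forall>z\<in>cball 0 (norm (zero n)^2). norm (F (zero n) z - T z) \<le> (1/2)^n)) else (\<lambda>_. 0))"

lemma T_approx: "n \<in> I \<Longrightarrow> zero n \<noteq> 0 \<Longrightarrow> z \<in> cball 0 (norm (zero n)^2) \<Longrightarrow>
    norm (F (zero n) z - T n z) \<le> (1/2)^n"
  using someI_ex[OF approximant_exists] unfolding T_def by simp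

lemma T_hol: "T n holomorphic_on S"
  using someI_ex[OF approximant_exists, of n] holomorphic_on_subset
  unfolding T_def by (cases "n \<in> I \<and> zero n \<noteq> 0") auto

definition "Q n z = (if n \<in> I then F (zero n) z - T n z else 0)"

lemma Q_bound:
  assumes "0 \<le> R" "R < 1"
  shows "eventually (\<lambda>n. \<forall>z\<in>cball 0 R. norm (Q n z) \<le> (1/2)^n) sequentially"
  using eventually_far_out[OF assms]
proof eventually_elim
  case (elim n)
  show ?case
  proof (cases "n \<in> I")
    case True
    then show ?thesis using elim T_approx[of n] by (auto simp: Q_def)
  qed (simp add: Q_def)
qed

lemma Q_summable: "z \<in> ball 0 1 \<Longrightarrow> summable (\<lambda>n. norm (Q n z))"
proof (rule summable_comparison_test_ev[OF _ summable_geometric[of "1/2::real"]])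
  assume "z \<in> ball 0 1"
  then show "eventually (\<lambda>n. norm (norm (Q n z)) \<le> (1/2)^n) sequentially"
    using Q_bound[of "norm z"] by (auto elim: eventually_mono)
qed simp

text \<open>The summands of \<open>d\<close>: \<open>a Q\<^sub>n\<close>, written so as to be visibly holomorphic on the whole disc.\<close>
definition "summand n z = (if n \<in> I then A (zero n) z * P (zero n) z - a z * T n z else 0)"

lemma summand_hol: "summand n holomorphic_on ball 0 1"
  using A_hol[of "zero n"] zero_in_Z[of n]
  unfolding summand_def by (cases "n \<in> I") (auto simp: Z_iff intro!: holomorphic_intros T_hol a_hol
      intro: holomorphic_on_subset[OF P_hol])

lemma summand_eq: "z \<in> ball 0 1 \<Longrightarrow> z \<noteq> zero n \<Longrightarrow> summand n z = a z * Q n z"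
  using a_F[OF zero_in_Z, of n z] by (simp add: summand_def Q_def algebra_simps)

lemma summand_bound:
  assumes R: "0 \<le> R" "R < 1"
  obtains B where "eventually (\<lambda>n. \<forall>z\<in>cball 0 R. norm (summand n z) \<le> B * (1/2)^n) sequentially"
proof -
  have "compact (a ` cball 0 R)"
    using R by (intro compact_continuous_image holomorphic_on_imp_continuous_on
        holomorphic_on_subset[OF a_hol]) auto
  then obtain B where B: "\<And>z. z \<in> cball 0 R \<Longrightarrow> norm (a z) \<le> B"
    using compact_imp_bounded bounded_iff by (metis imageI)
  have "norm (a 0) \<le> B" using B[of 0] R by simp
  then have "0 \<le> B" using norm_ge_zero order_trans by blast
  have "eventually (\<lambda>n. \<forall>z\<in>cball 0 R. norm (summand n z) \<le> B * (1/2)^n) sequentially"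
    using Q_bound[OF R] eventually_far_out[OF R]
  proof eventually_elim
    case (elim n)
    show ?case
    proof
      fix z :: complex assume z: "z \<in> cball 0 R"
      show "norm (summand n z) \<le> B * (1/2)^n"
      proof (cases "n \<in> I")
        case True
        have "norm (zero n)^2 < norm (zero n)"
          using elim True zero_in_Z[OF True] by (simp add: Z_iff power2_eq_square)
        then have "z \<noteq> zero n" using elim True z by auto
        then have "norm (summand n z) = norm (a z) * norm (Q n z)"
          using z R summand_eq[of z n] by (simp add: norm_mult)
        also have "\<dots> \<le> B * (1/2)^n"
          using B[OF z] \<open>0 \<le> B\<close> elim z by (intro mult_mono) auto
        finally show ?thesis .
      qed (simp add: summand_def \<open>0 \<le> B\<close>)
    qed
  qed
  then show ?thesis by (rule that)
qed

definition "d z = (\<Sum>n. summand n z)"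

lemma d_hol: "d holomorphic_on ball 0 1"
proof -
  have "(\<lambda>z. \<Sum>n. summand n z) holomorphic_on ball 0 1"
  proof (rule holomorphic_on_disc_uniform_limit[OF open_ball order_refl])
    show "(\<lambda>z. \<Sum>n<N. summand n z) holomorphic_on ball 0 1" for N
      by (intro holomorphic_intros summand_hol)
    fix R :: real assume R: "0 \<le> R" "R < 1"
    obtain B where "eventually (\<lambda>n. \<forall>z\<in>cball 0 R. norm (summand n z) \<le> B * (1/2)^n) sequentially"
      by (rule summand_bound[OF R])
    then show "uniform_limit (cball 0 R) (\<lambda>N z. \<Sum>n<N. summand n z) (\<lambda>z. \<Sum>n. summand n z) sequentially"
      by (rule Weierstrass_m_test_ev) (intro summable_mult summable_geometric, simp)
  qed
  then show ?thesis by (simp add: d_def[abs_def])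
qed

text \<open>Near the zero \<open>\<alpha> = zero k\<close>, \<open>d = A\<^sub>\<alpha> P\<^sub>\<alpha> - a T\<^sub>k + a \<Sum>\<^sub>n\<^sub>\<noteq>\<^sub>k Q\<^sub>n\<close>, and the last sum is holomorphic
  near \<open>\<alpha>\<close> because no other zero lies in \<open>ball \<alpha> (r \<alpha>)\<close>.\<close>
definition "tail k z = (\<Sum>n. if n = k then 0 else Q n z)"

lemma other_zeros_far:
  assumes "\<alpha> \<in> Z" "n \<in> I" "n \<noteq> idx \<alpha>"
  shows "zero n \<notin> ball \<alpha> (r \<alpha>)"
proof
  assume "zero n \<in> ball \<alpha> (r \<alpha>)"
  moreover have "zero n \<noteq> \<alpha>" using idx_zero[OF assms(2)] assms(3) by auto
  ultimately show False using isolated_zero[OF assms(1)] zero_in_Z[OF assms(2)] by (auto simp: Z_iff)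
qed

lemma tail_hol:
  assumes \<alpha>: "\<alpha> \<in> Z"
  shows "tail (idx \<alpha>) holomorphic_on ball \<alpha> (r \<alpha>)"
  unfolding tail_def
proof (rule holomorphic_on_disc_uniform_limit[OF open_ball])
  show "ball \<alpha> (r \<alpha>) \<subseteq> ball 0 1" using r_pos \<alpha> by (auto simp: Z_iff)
  show "(\<lambda>z. \<Sum>n<N. if n = idx \<alpha> then 0 else Q n z) holomorphic_on ball \<alpha> (r \<alpha>)" for N
  proof (intro holomorphic_intros)
    fix n
    have "F (zero n) holomorphic_on ball \<alpha> (r \<alpha>)" if "n \<in> I" "n \<noteq> idx \<alpha>"
      using F_hol[OF zero_in_Z[OF that(1)], of "ball \<alpha> (r \<alpha>)"] other_zeros_far[OF \<alpha> that]
      by (simp add: Diff_triv)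
    then show "(\<lambda>z. if n = idx \<alpha> then 0 else Q n z) holomorphic_on ball \<alpha> (r \<alpha>)"
      unfolding Q_def by (cases "n = idx \<alpha>"; cases "n \<in> I") (auto intro!: holomorphic_intros T_hol)
  qed
  fix R :: real assume R: "0 \<le> R" "R < 1"
  have "eventually (\<lambda>n. \<forall>z\<in>cball 0 R. norm (if n = idx \<alpha> then 0 else Q n z) \<le> (1/2)^n) sequentially"
    using Q_bound[OF R] by eventually_elim simp
  then show "uniform_limit (cball 0 R) (\<lambda>N z. \<Sum>n<N. if n = idx \<alpha> then 0 else Q n z)
      (\<lambda>z. \<Sum>n. if n = idx \<alpha> then 0 else Q n z) sequentially"
    by (rule Weierstrass_m_test_ev) (rule summable_geometric, simp)
qed

lemma d_near_zero:
  assumes \<alpha>: "\<alpha> \<in> Z" and z: "z \<in> ball \<alpha> (r \<alpha>)"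
  shows "d z = a z * tail (idx \<alpha>) z + summand (idx \<alpha>) z"
proof -
  define k where "k = idx \<alpha>"
  have zD: "z \<in> ball 0 1" using z r_pos[of \<alpha>] \<alpha> by (auto simp: Z_iff)
  have "a z * (if n = k then 0 else Q n z) = (if n = k then 0 else summand n z)" for n
  proof (cases "n \<in> I \<and> n \<noteq> k")
    case True
    then have "z \<noteq> zero n" using other_zeros_far[OF \<alpha>, of n] z by (auto simp: k_def)
    then show ?thesis using True summand_eq[OF zD] by simp
  qed (auto simp: Q_def summand_def)
  moreover have "summable (\<lambda>n. if n = k then 0 else Q n z)"
    by (rule summable_comparison_test[OF _ Q_summable[OF zD]]) auto
  then have "(\<lambda>n. a z * (if n = k then 0 else Q n z)) sums (a z * tail k z)"
    unfolding tail_def by (intro sums_mult summable_sums)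
  ultimately have "(\<lambda>n. if n = k then 0 else summand n z) sums (a z * tail k z)" by simp
  from sums_add[OF this sums_single[of k "\<lambda>n. summand n z"]]
  have "(\<lambda>n. (if n = k then 0 else summand n z) + (if n = k then summand n z else 0))
      sums (a z * tail k z + summand k z)" .
  moreover have "(\<lambda>n. (if n = k then 0 else summand n z) + (if n = k then summand n z else 0)) =
      (\<lambda>n. summand n z)"
    by auto
  ultimately show ?thesis by (simp add: d_def sums_iff k_def)
qed

lemma d_local:
  assumes \<alpha>: "\<alpha> \<in> Z"
  shows "\<exists>\<rho>>0. \<exists>w. w holomorphic_on ball \<alpha> \<rho> \<and> (\<forall>z\<in>ball \<alpha> \<rho>. d z - A \<alpha> z * P \<alpha> z = a z * w z)"
proof (intro exI conjI ballI)
  show "r \<alpha> > 0" using r_pos \<alpha> by (simp add: Z_iff)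
  show "(\<lambda>z. tail (idx \<alpha>) z - T (idx \<alpha>) z) holomorphic_on ball \<alpha> (r \<alpha>)"
    by (intro holomorphic_intros tail_hol[OF \<alpha>] T_hol)
  fix z assume "z \<in> ball \<alpha> (r \<alpha>)"
  then show "d z - A \<alpha> z * P \<alpha> z = a z * (tail (idx \<alpha>) z - T (idx \<alpha>) z)"
    using d_near_zero[OF \<alpha>] zero_idx[OF \<alpha>] by (simp add: summand_def algebra_simps)
qed

end

lemma principal_part_at_point:
  fixes a J :: "complex \<Rightarrow> complex"
  assumes a: "a holomorphic_on ball 0 1" and nz: "\<exists>w\<in>ball 0 1. a w \<noteq> 0" and \<alpha>: "\<alpha> \<in> ball 0 1"
    and J: "\<rho> > 0" "J holomorphic_on ball \<alpha> \<rho>"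
  shows "\<exists>m r A P. 0 < r \<and> ball \<alpha> r \<subseteq> ball 0 1 \<and> A holomorphic_on ball 0 1 \<and>
      (\<forall>z\<in>ball 0 1. a z = (z - \<alpha>)^m * A z) \<and> (\<forall>z\<in>ball \<alpha> r. A z \<noteq> 0) \<and> P holomorphic_on UNIV \<and>
      (\<exists>R. R holomorphic_on ball \<alpha> r \<and> (\<forall>z\<in>ball \<alpha> r. J z = A z * P z + a z * R z))"
proof -
  obtain m r0 A0 where A0: "0 < r0" "ball \<alpha> r0 \<subseteq> ball 0 1" "A0 holomorphic_on ball \<alpha> r0"
      "\<And>w. w \<in> ball \<alpha> r0 \<Longrightarrow> a w = (w - \<alpha>)^m * A0 w" "\<And>w. w \<in> ball \<alpha> r0 \<Longrightarrow> A0 w \<noteq> 0"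
    by (rule holomorphic_local_factorization[OF a open_ball connected_ball \<alpha> nz]) (rule that, assumption+)
  obtain A where A: "A holomorphic_on ball 0 1" "\<And>w. w \<in> ball 0 1 \<Longrightarrow> a w = (w - \<alpha>)^m * A w"
      "\<And>w. w \<in> ball \<alpha> r0 \<Longrightarrow> A w = A0 w"
    by (rule extend_local_factor[OF open_ball a A0(1-4)], assumption) (rule that, assumption+)
  define r where "r = min r0 \<rho>"
  have r: "0 < r" "ball \<alpha> r \<subseteq> ball \<alpha> r0" "ball \<alpha> r \<subseteq> ball \<alpha> \<rho>"
    using A0(1) J(1) by (auto simp: r_def)
  have rD: "ball \<alpha> r \<subseteq> ball 0 1" using r A0(2) by blast
  have A_nz: "A z \<noteq> 0" if "z \<in> ball \<alpha> r" for z using that r A(3) A0(5) by auto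
  obtain P R where PR: "P holomorphic_on UNIV" "R holomorphic_on ball \<alpha> r"
      "\<And>z. z \<in> ball \<alpha> r \<Longrightarrow> J z = A z * P z + (z - \<alpha>)^m * A z * R z"
    by (rule principal_part_split[OF holomorphic_on_subset[OF A(1) rD] A_nz
        holomorphic_on_subset[OF J(2) r(3)], of m]) (assumption | rule that)+
  have "\<forall>z\<in>ball \<alpha> r. J z = A z * P z + a z * R z"
    using PR(3) A(2) rD by auto
  then show ?thesis using r(1) rD A(1,2) A_nz PR(1,2) by blast
qed

text \<open>Interpolation modulo \<open>a\<close>: given functions \<open>J\<^sub>\<alpha>\<close> holomorphic near each zero \<open>\<alpha>\<close> of \<open>a\<close>,
  there is one \<open>d\<close> holomorphic on the disc with \<open>d \<equiv> J\<^sub>\<alpha>\<close> modulo \<open>a\<close> near every \<open>\<alpha>\<close>: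
  choose the data of the locale at every zero and correct by \<open>a R\<^sub>\<alpha>\<close>.\<close>
theorem interpolation_disc:
  fixes a :: "complex \<Rightarrow> complex" and J :: "complex \<Rightarrow> complex \<Rightarrow> complex"
  assumes a: "a holomorphic_on ball 0 1" and nz: "\<exists>w\<in>ball 0 1. a w \<noteq> 0"
    and J: "\<And>\<alpha>. \<alpha> \<in> ball 0 1 \<Longrightarrow> a \<alpha> = 0 \<Longrightarrow> \<exists>\<rho>>0. J \<alpha> holomorphic_on ball \<alpha> \<rho>"
  obtains d where "d holomorphic_on ball 0 1"
    "\<And>\<alpha>. \<alpha> \<in> ball 0 1 \<Longrightarrow> a \<alpha> = 0 \<Longrightarrow>
       \<exists>\<rho>>0. \<exists>w. w holomorphic_on ball \<alpha> \<rho> \<and> (\<forall>z\<in>ball \<alpha> \<rho>. d z - J \<alpha> z = a z * w z)"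
proof -
  have "\<exists>m r A P. 0 < r \<and> ball \<alpha> r \<subseteq> ball 0 1 \<and> A holomorphic_on ball 0 1 \<and>
      (\<forall>z\<in>ball 0 1. a z = (z - \<alpha>)^m * A z) \<and> (\<forall>z\<in>ball \<alpha> r. A z \<noteq> 0) \<and> P holomorphic_on UNIV \<and>
      (\<exists>R. R holomorphic_on ball \<alpha> r \<and> (\<forall>z\<in>ball \<alpha> r. J \<alpha> z = A z * P z + a z * R z))"
    if \<alpha>: "\<alpha> \<in> ball 0 1" "a \<alpha> = 0" for \<alpha>
    using J[OF \<alpha>] principal_part_at_point[OF a nz \<alpha>(1)] by blast
  then obtain m r A P where data: "\<And>\<alpha>. \<alpha> \<in> ball 0 1 \<Longrightarrow> a \<alpha> = 0 \<Longrightarrow>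
      0 < r \<alpha> \<and> ball \<alpha> (r \<alpha>) \<subseteq> ball 0 1 \<and> A \<alpha> holomorphic_on ball 0 1 \<and>
      (\<forall>z\<in>ball 0 1. a z = (z - \<alpha>)^(m \<alpha>) * A \<alpha> z) \<and> (\<forall>z\<in>ball \<alpha> (r \<alpha>). A \<alpha> z \<noteq> 0) \<and>
      P \<alpha> holomorphic_on UNIV \<and>
      (\<exists>R. R holomorphic_on ball \<alpha> (r \<alpha>) \<and> (\<forall>z\<in>ball \<alpha> (r \<alpha>). J \<alpha> z = A \<alpha> z * P \<alpha> z + a z * R z))"
    by metis
  interpret disc_interpolation a m r A P
  proof
    show "A \<alpha> holomorphic_on ball 0 1" "0 < r \<alpha> \<and> ball \<alpha> (r \<alpha>) \<subseteq> ball 0 1"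
      "P \<alpha> holomorphic_on UNIV" if "\<alpha> \<in> ball 0 1" "a \<alpha> = 0" for \<alpha>
      using data[OF that] by blast+
    show "a z = (z - \<alpha>)^(m \<alpha>) * A \<alpha> z" if "\<alpha> \<in> ball 0 1" "a \<alpha> = 0" "z \<in> ball 0 1" for \<alpha> z
      using data[OF that(1,2)] that(3) by blast
    show "A \<alpha> z \<noteq> 0" if "\<alpha> \<in> ball 0 1" "a \<alpha> = 0" "z \<in> ball \<alpha> (r \<alpha>)" for \<alpha> z
      using data[OF that(1,2)] that(3) by blast
  qed (fact a nz)+
  show ?thesis
  proof (rule that[OF d_hol])
    fix \<alpha> assume \<alpha>: "\<alpha> \<in> ball 0 1" "a \<alpha> = 0"
    then have "\<alpha> \<in> Z" by (simp add: Z_iff)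
    then obtain \<rho> w where w: "\<rho> > 0" "w holomorphic_on ball \<alpha> \<rho>"
        "\<And>z. z \<in> ball \<alpha> \<rho> \<Longrightarrow> d z - A \<alpha> z * P \<alpha> z = a z * w z"
      using d_local by blast
    obtain R where R: "R holomorphic_on ball \<alpha> (r \<alpha>)"
        "\<And>z. z \<in> ball \<alpha> (r \<alpha>) \<Longrightarrow> J \<alpha> z = A \<alpha> z * P \<alpha> z + a z * R z"
      using data[OF \<alpha>] by blast
    define \<rho>' where "\<rho>' = min \<rho> (r \<alpha>)"
    have \<rho>': "\<rho>' > 0" "ball \<alpha> \<rho>' \<subseteq> ball \<alpha> \<rho>" "ball \<alpha> \<rho>' \<subseteq> ball \<alpha> (r \<alpha>)"
      using w(1) data[OF \<alpha>] by (auto simp: \<rho>'_def)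
    have "(\<lambda>z. w z - R z) holomorphic_on ball \<alpha> \<rho>'"
      using \<rho>' by (intro holomorphic_intros holomorphic_on_subset[OF w(2)] holomorphic_on_subset[OF R(1)])
    moreover have "d z - J \<alpha> z = a z * (w z - R z)" if "z \<in> ball \<alpha> \<rho>'" for z
    proof -
      have "z \<in> ball \<alpha> \<rho>" "z \<in> ball \<alpha> (r \<alpha>)" using that \<rho>' by auto
      then show ?thesis using w(3)[of z] R(2)[of z] by (simp add: algebra_simps)
    qed
    ultimately show "\<exists>\<rho>>0. \<exists>w. w holomorphic_on ball \<alpha> \<rho> \<and> (\<forall>z\<in>ball \<alpha> \<rho>. d z - J \<alpha> z = a z * w z)"
      using \<rho>'(1) by blast
  qed
qed

text \<open>Hence, when \<open>a \<not>\<equiv> 0\<close>, a function that is locally a square modulo \<open>a\<close> is globally a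
  square modulo \<open>a\<close>: with \<open>d \<equiv> J\<^sub>\<alpha>\<close> we get \<open>q - d\<^sup>2 = (q - J\<^sub>\<alpha>\<^sup>2) - (d - J\<^sub>\<alpha>)(d + J\<^sub>\<alpha>) \<equiv> 0\<close>.\<close>
lemma square_mod_nonzero:
  fixes a q :: "complex \<Rightarrow> complex"
  assumes a: "a holomorphic_on ball 0 1" and nz: "\<exists>w\<in>ball 0 1. a w \<noteq> 0" and q: "q holomorphic_on ball 0 1"
    and local: "\<And>\<alpha>. \<alpha> \<in> ball 0 1 \<Longrightarrow> \<exists>\<rho> J v. \<rho> > 0 \<and> ball \<alpha> \<rho> \<subseteq> ball 0 1 \<and>
       J holomorphic_on ball \<alpha> \<rho> \<and> v holomorphic_on ball \<alpha> \<rho> \<and> (\<forall>z\<in>ball \<alpha> \<rho>. q z - (J z)^2 = a z * v z)"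
  obtains d b where "d holomorphic_on ball 0 1" "b holomorphic_on ball 0 1"
    "\<And>z. z \<in> ball 0 1 \<Longrightarrow> q z - (d z)^2 = a z * b z"
proof -
  obtain \<rho> J v where Jv: "\<And>\<alpha>. \<alpha> \<in> ball 0 1 \<Longrightarrow> \<rho> \<alpha> > 0 \<and> ball \<alpha> (\<rho> \<alpha>) \<subseteq> ball 0 1 \<and>
       J \<alpha> holomorphic_on ball \<alpha> (\<rho> \<alpha>) \<and> v \<alpha> holomorphic_on ball \<alpha> (\<rho> \<alpha>) \<and>
       (\<forall>z\<in>ball \<alpha> (\<rho> \<alpha>). q z - (J \<alpha> z)^2 = a z * v \<alpha> z)"
    using local by metis
  obtain d where d: "d holomorphic_on ball 0 1"
    "\<And>\<alpha>. \<alpha> \<in> ball 0 1 \<Longrightarrow> a \<alpha> = 0 \<Longrightarrow>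
       \<exists>\<rho>>0. \<exists>w. w holomorphic_on ball \<alpha> \<rho> \<and> (\<forall>z\<in>ball \<alpha> \<rho>. d z - J \<alpha> z = a z * w z)"
  proof (rule interpolation_disc[OF a nz, of J])
    show "\<exists>\<rho>>0. J \<alpha> holomorphic_on ball \<alpha> \<rho>" if "\<alpha> \<in> ball 0 1" for \<alpha>
      using Jv[OF that] by blast
  qed (rule that, assumption+)
  have qd: "(\<lambda>z. q z - (d z)^2) holomorphic_on ball 0 1" by (intro holomorphic_intros q d(1))
  obtain b where b: "b holomorphic_on ball 0 1" "\<And>z. z \<in> ball 0 1 \<Longrightarrow> q z - (d z)^2 = a z * b z"
  proof (rule divisible_if_locally_divisible[OF open_ball connected_ball a qd nz])
    fix \<alpha> assume \<alpha>: "\<alpha> \<in> ball 0 1" "a \<alpha> = 0"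
    obtain \<rho>1 w where w: "\<rho>1 > 0" "w holomorphic_on ball \<alpha> \<rho>1"
        "\<And>z. z \<in> ball \<alpha> \<rho>1 \<Longrightarrow> d z - J \<alpha> z = a z * w z"
      using d(2)[OF \<alpha>] by blast
    define \<rho>' where "\<rho>' = min \<rho>1 (\<rho> \<alpha>)"
    have \<rho>': "\<rho>' > 0" "ball \<alpha> \<rho>' \<subseteq> ball \<alpha> \<rho>1" "ball \<alpha> \<rho>' \<subseteq> ball \<alpha> (\<rho> \<alpha>)"
      using w(1) Jv[OF \<alpha>(1)] by (auto simp: \<rho>'_def)
    have "(\<lambda>z. v \<alpha> z - w z * (d z + J \<alpha> z)) holomorphic_on ball \<alpha> \<rho>'"
      using Jv[OF \<alpha>(1)] \<rho>' holomorphic_on_subset[OF d(1)]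
      by (intro holomorphic_intros holomorphic_on_subset[OF w(2)]) (auto intro: holomorphic_on_subset)
    moreover have "q z - (d z)^2 = a z * (v \<alpha> z - w z * (d z + J \<alpha> z))" if z: "z \<in> ball \<alpha> \<rho>'" for z
    proof -
      have e1: "q z - (J \<alpha> z)^2 = a z * v \<alpha> z" using Jv[OF \<alpha>(1)] z \<rho>' by auto
      have e2: "d z - J \<alpha> z = a z * w z" using w(3)[of z] z \<rho>' by auto
      have "q z - (d z)^2 = (q z - (J \<alpha> z)^2) - (d z - J \<alpha> z) * (d z + J \<alpha> z)"
        by (simp add: algebra_simps power2_eq_square)
      also have "\<dots> = a z * (v \<alpha> z - w z * (d z + J \<alpha> z))"
        unfolding e1 e2 by (simp add: algebra_simps)
      finally show ?thesis .
    qed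
    ultimately show "\<exists>\<rho>>0. \<exists>c. c holomorphic_on ball \<alpha> \<rho> \<and> (\<forall>z\<in>ball \<alpha> \<rho>. q z - (d z)^2 = a z * c z)"
      using \<rho>'(1) by blast
  qed (rule that, assumption+)
  show ?thesis by (rule that[OF d(1) b])
qed

text \<open>The \<open>n\<close>-th factor is the canonical factor \<open>E\<^sub>p\<^sub>n\<close>
  evaluated at \<open>(\<alpha>\<^sub>n - \<beta>\<^sub>n) / (z - \<beta>\<^sub>n)\<close>, where \<open>\<beta>\<^sub>n = \<alpha>\<^sub>n / \<bar>\<alpha>\<^sub>n\<bar>\<close> lies on the circle; it vanishes
  exactly at \<open>\<alpha>\<^sub>n\<close>, and it is within \<open>3 \<cdot> 2^{-n-1}\<close> of \<open>1\<close> on \<open>cball 0 R\<close> once \<open>\<bar>\<alpha>\<^sub>n\<bar>\<close> is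
  close to \<open>1\<close>, so the product converges locally uniformly.\<close>
locale disc_product =
  fixes \<alpha> :: "nat \<Rightarrow> complex" and I :: "nat set" and p :: "nat \<Rightarrow> nat"
  assumes \<alpha>_in_disc: "\<And>n. n \<in> I \<Longrightarrow> \<alpha> n \<in> ball 0 1"
    and fin: "\<And>R. R < 1 \<Longrightarrow> finite {n\<in>I. norm (\<alpha> n) \<le> R}"
    and p_ge: "\<And>n. n \<le> p n"
begin

definition "\<beta> n = (if \<alpha> n = 0 then 1 else \<alpha> n / of_real (norm (\<alpha> n)))"
definition "w n z = (\<alpha> n - \<beta> n) / (z - \<beta> n)"
definition "g n z = (if n \<in> I then weierstrass_factor (p n) (w n z) else 1)"
definition "f z = (\<Prod>n. g n z)"

lemma norm_\<beta>: "norm (\<beta> n) = 1"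
  by (auto simp: \<beta>_def norm_divide)

lemma norm_\<alpha>_minus_\<beta>: assumes "\<alpha> n \<noteq> 0" "norm (\<alpha> n) < 1" shows "norm (\<alpha> n - \<beta> n) = 1 - norm (\<alpha> n)"
proof -
  have "\<alpha> n - \<beta> n = of_real (norm (\<alpha> n) - 1) * \<beta> n"
    using assms by (simp add: \<beta>_def field_simps)
  moreover have "norm (of_real (norm (\<alpha> n) - 1) :: complex) = \<bar>norm (\<alpha> n) - 1\<bar>"
    by (rule norm_of_real)
  ultimately have "norm (\<alpha> n - \<beta> n) = \<bar>norm (\<alpha> n) - 1\<bar>" by (simp only: norm_mult norm_\<beta>) simp
  then show ?thesis using assms by simp
qed

lemma norm_z_minus_\<beta>: assumes "norm z \<le> R" shows "1 - R \<le> norm (z - \<beta> n)"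
proof -
  have "norm (\<beta> n) - norm z \<le> norm (\<beta> n - z)" by (rule norm_triangle_ineq2)
  then show ?thesis using assms norm_\<beta>[of n] by (simp add: norm_minus_commute)
qed

lemma z_ne_\<beta>: "norm z < 1 \<Longrightarrow> z \<noteq> \<beta> n"
  using norm_\<beta>[of n] by auto

lemma g_hol: "g n holomorphic_on ball 0 1"
proof -
  have "(\<lambda>z. weierstrass_factor (p n) (w n z)) holomorphic_on ball 0 1"
    unfolding w_def by (intro holomorphic_intros) (use z_ne_\<beta> in auto)
  then show ?thesis unfolding g_def by (cases "n \<in> I") auto
qed

lemma g_cont: assumes "R < 1" shows "continuous_on (cball 0 R) (g n)"
proof -
  have "cball 0 R \<subseteq> ball (0::complex) 1" using assms by auto
  then show ?thesis using continuous_on_subset[OF holomorphic_on_imp_continuous_on[OF g_hol]] by blast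
qed

lemma w_small:
  assumes R: "0 \<le> R" "R < 1"
  shows "eventually (\<lambda>n. n \<in> I \<longrightarrow> (\<forall>z\<in>cball 0 R. norm (w n z) \<le> 1/2)) sequentially"
proof -
  define R' where "R' = (1 + R) / 2"
  have R': "R' < 1" "0 < R'" using R by (auto simp: R'_def)
  obtain k where k: "{n\<in>I. norm (\<alpha> n) \<le> R'} \<subseteq> {..<k}"
    using finite_nat_bounded[OF fin[OF R'(1)]] by blast
  have "n \<in> I \<longrightarrow> (\<forall>z\<in>cball 0 R. norm (w n z) \<le> 1/2)" if "n \<ge> k" for n
  proof (intro impI ballI)
    fix z :: complex assume nI: "n \<in> I" and z: "z \<in> cball 0 R"
    have big: "R' < norm (\<alpha> n)" using k that nI by force
    have a1: "norm (\<alpha> n) < 1" using \<alpha>_in_disc[OF nI] by simp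
    have a0: "\<alpha> n \<noteq> 0" using big R' by auto
    have num: "norm (\<alpha> n - \<beta> n) \<le> (1 - R) / 2"
      using norm_\<alpha>_minus_\<beta>[OF a0 a1] big by (simp add: R'_def)
    have den: "1 - R \<le> norm (z - \<beta> n)" using z by (intro norm_z_minus_\<beta>) simp
    have "norm (w n z) = norm (\<alpha> n - \<beta> n) / norm (z - \<beta> n)" by (simp add: w_def norm_divide)
    also have "\<dots> \<le> ((1 - R) / 2) / (1 - R)"
      using num den R by (intro frac_le) auto
    also have "\<dots> = 1/2" using R by simp
    finally show "norm (w n z) \<le> 1/2" .
  qed
  then show ?thesis unfolding eventually_sequentially by blast
qed

lemma g_bound:
  assumes R: "0 \<le> R" "R < 1"
  shows "eventually (\<lambda>n. \<forall>z\<in>cball 0 R. norm (g n z - 1) \<le> 3 * (1/2)^Suc n) sequentially"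
  using w_small[OF R]
proof eventually_elim
  case (elim n)
  show ?case
  proof
    fix z :: complex assume z: "z \<in> cball 0 R"
    show "norm (g n z - 1) \<le> 3 * (1/2)^Suc n"
    proof (cases "n \<in> I")
      case True
      have wz: "norm (w n z) \<le> 1/2" using elim True z by blast
      have "norm (g n z - 1) \<le> 3 * norm (w n z) ^ Suc (p n)"
        using weierstrass_factor_bound[OF wz, of "p n"] True by (simp add: g_def)
      also have "\<dots> \<le> 3 * (1/2) ^ Suc (p n)"
        using wz by (intro mult_left_mono power_mono) auto
      also have "\<dots> \<le> 3 * (1/2) ^ Suc n"
        using p_ge[of n] by (intro mult_left_mono power_decreasing) auto
      finally show ?thesis .
    qed (simp add: g_def)
  qed
qed

lemma summable_bound: "summable (\<lambda>n. 3 * (1/2::real)^Suc n)"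
  by (intro summable_mult summable_Suc_iff[THEN iffD2] summable_geometric) simp

lemma convergent: assumes "z \<in> ball 0 1" shows "convergent_prod (\<lambda>n. g n z)"
proof -
  have "eventually (\<lambda>n. \<forall>w\<in>cball 0 (norm z). norm (g n w - 1) \<le> 3 * (1/2)^Suc n) sequentially"
    using assms by (intro g_bound) auto
  then have "eventually (\<lambda>n. norm (norm (g n z - 1)) \<le> 3 * (1/2)^Suc n) sequentially"
    by eventually_elim auto
  then have "summable (\<lambda>n. norm (g n z - 1))"
    by (rule summable_comparison_test_ev) (rule summable_bound)
  then have "abs_convergent_prod (\<lambda>n. g n z)" by (simp add: abs_convergent_prod_conv_summable)
  then show ?thesis by (rule abs_convergent_prod_imp_convergent_prod)
qed

lemma has_prod: "z \<in> ball 0 1 \<Longrightarrow> (\<lambda>n. g n z) has_prod f z"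
  unfolding f_def by (rule convergent_prod_has_prod[OF convergent])

lemma uniform_limit_partial_products:
  assumes R: "0 \<le> R" "R < 1"
  shows "uniform_limit (cball 0 R) (\<lambda>N z. \<Prod>n<N. g n z) f sequentially"
proof -
  have uc: "uniformly_convergent_on (cball 0 R) (\<lambda>N z. \<Prod>n<N. g n z)"
  proof (rule uniformly_convergent_on_prod')
    show "uniformly_convergent_on (cball 0 R) (\<lambda>N z. \<Sum>n<N. norm (g n z - 1))"
      by (rule Weierstrass_m_test'_ev[OF _ summable_bound]) (use g_bound[OF R] in \<open>simp\<close>)
  qed (use g_cont[OF R(2)] in auto)
  then obtain l where l: "uniform_limit (cball 0 R) (\<lambda>N z. \<Prod>n<N. g n z) l sequentially"
    by (auto simp: uniformly_convergent_on_def)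
  also have "?this \<longleftrightarrow> uniform_limit (cball 0 R) (\<lambda>N z. \<Prod>n<N. g n z) f sequentially"
  proof (intro uniform_limit_cong)
    fix z :: complex assume z: "z \<in> cball 0 R"
    have "(\<lambda>n. \<Prod>k<n. g k z) \<longlonglongrightarrow> l z" by (rule tendsto_uniform_limitI[OF l z])
    then have "(\<lambda>n. \<Prod>k<Suc n. g k z) \<longlonglongrightarrow> l z" by (rule LIMSEQ_Suc)
    moreover have "(\<lambda>n. \<Prod>k<Suc n. g k z) \<longlonglongrightarrow> f z"
      using convergent_prod_LIMSEQ[OF convergent[of z]] z R unfolding lessThan_Suc_atMost
      by (simp add: f_def)
    ultimately show "l z = f z" by (rule LIMSEQ_unique)
  qed auto
  finally show ?thesis .
qed

lemma f_hol: "f holomorphic_on ball 0 1"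
proof (rule holomorphic_on_disc_uniform_limit[OF open_ball order_refl])
  show "(\<lambda>z. \<Prod>n<N. g n z) holomorphic_on ball 0 1" for N
    by (intro holomorphic_intros g_hol)
qed (rule uniform_limit_partial_products)

lemma g_zero: "z \<in> ball 0 1 \<Longrightarrow> g n z = 0 \<longleftrightarrow> n \<in> I \<and> \<alpha> n = z"
proof -
  assume z: "z \<in> ball 0 1"
  then have zb: "z - \<beta> n \<noteq> 0" using z_ne_\<beta>[of z n] by auto
  have "w n z = 1 \<longleftrightarrow> \<alpha> n = z" using zb by (auto simp: w_def field_simps)
  then show ?thesis by (simp add: g_def)
qed

lemma f_zero: "z \<in> ball 0 1 \<Longrightarrow> f z = 0 \<longleftrightarrow> (\<exists>n\<in>I. \<alpha> n = z)"
  using has_prod_eq_0_iff[OF has_prod, of z] g_zero[of z] by auto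

lemma w_hol: "w n holomorphic_on ball 0 1"
  unfolding w_def by (intro holomorphic_intros) (use z_ne_\<beta> in auto)

lemma g_factor:
  assumes "n \<in> I" "z \<in> ball 0 1"
  shows "g n z = exp (\<Sum>k=1..p n. w n z ^ k / of_nat k) / (z - \<beta> n) * (z - \<alpha> n)"
proof -
  have zb: "z - \<beta> n \<noteq> 0" using z_ne_\<beta>[of z n] assms by auto
  have "1 - w n z = (z - \<alpha> n) / (z - \<beta> n)" using zb by (simp add: w_def field_simps)
  then show ?thesis using assms by (simp add: g_def weierstrass_factor_def)
qed

lemma zorder_g: assumes nI: "n \<in> I" shows "zorder (g n) (\<alpha> n) = 1"
proof -
  define h where "h z = exp (\<Sum>k=1..p n. w n z ^ k / of_nat k) / (z - \<beta> n)" for z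
  have hh: "h holomorphic_on ball 0 1"
    unfolding h_def using w_hol[of n] by (intro holomorphic_intros) (use z_ne_\<beta> in auto)
  have hn: "h (\<alpha> n) \<noteq> 0" using z_ne_\<beta>[of "\<alpha> n" n] \<alpha>_in_disc[OF nI] by (simp add: h_def)
  have "zorder (g n) (\<alpha> n) = int 1"
  proof (rule zorder_eqI[OF open_ball \<alpha>_in_disc[OF nI] hh hn])
    fix z assume "z \<in> ball 0 1" "z \<noteq> \<alpha> n"
    then show "g n z = h z * (z - \<alpha> n) powi int 1"
      using g_factor[OF nI] by (simp add: h_def)
  qed
  then show ?thesis by simp
qed

lemma f_ev_nz: assumes z: "z \<in> ball 0 1" shows "eventually (\<lambda>w. w \<in> ball 0 1 \<and> f w \<noteq> 0) (at z)"
proof -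
  define R where "R = (1 + norm z) / 2"
  have R: "norm z < R" "R < 1" using z by (auto simp: R_def)
  define V where "V = \<alpha> ` {n\<in>I. norm (\<alpha> n) \<le> R}"
  have fV: "finite V" unfolding V_def using fin[OF R(2)] by simp
  have e1: "eventually (\<lambda>w. \<forall>v\<in>V. w \<noteq> v \<or> v = z) (at z)"
  proof (rule eventually_ball_finite[OF fV], rule ballI)
    fix v assume "v \<in> V"
    show "eventually (\<lambda>w. w \<noteq> v \<or> v = z) (at z)"
    proof (cases "v = z")
      case False
      have "eventually (\<lambda>w. w \<noteq> v) (at z)"
        by (rule eventually_neq_at_within)
      then show ?thesis by (rule eventually_mono) simp
    qed simp
  qed
  have e2: "eventually (\<lambda>w. w \<in> ball 0 R - {z}) (at z)"
    using R by (intro eventually_at_in_open) auto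
  show ?thesis using e1 e2
  proof eventually_elim
    case (elim w)
    have wD: "w \<in> ball 0 1" using elim R by auto
    have "f w \<noteq> 0"
    proof
      assume "f w = 0"
      then obtain n where n: "n \<in> I" "\<alpha> n = w" using f_zero[OF wD] by blast
      then have "\<alpha> n \<in> V" using elim unfolding V_def by auto
      then show False using elim n by auto
    qed
    then show ?case using wD by simp
  qed
qed

lemma shifted_product: "disc_product (\<lambda>n. \<alpha> (n + N)) {n. n + N \<in> I} (\<lambda>n. p (n + N))"
proof
  show "\<alpha> (n + N) \<in> ball 0 1" if "n \<in> {n. n + N \<in> I}" for n using that \<alpha>_in_disc by auto
  show "n \<le> p (n + N)" for n using p_ge[of "n + N"] by simp
  fix R :: real assume R: "R < 1"
  have "{n \<in> {n. n + N \<in> I}. norm (\<alpha> (n + N)) \<le> R} = (\<lambda>n. n + N) -` {n\<in>I. norm (\<alpha> n) \<le> R}"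
    by auto
  then show "finite {n \<in> {n. n + N \<in> I}. norm (\<alpha> (n + N)) \<le> R}"
    using finite_vimageI[OF fin[OF R], of "\<lambda>n. n + N"] by (simp add: inj_def)
qed

lemma product_split_at:
  assumes z: "z \<in> ball 0 1"
  obtains h where "h holomorphic_on ball 0 1" "h z \<noteq> 0"
    "\<And>w. w \<in> ball 0 1 \<Longrightarrow> f w = h w * (\<Prod>n\<in>{n\<in>I. \<alpha> n = z}. g n w)"
proof -
  define A where "A = {n\<in>I. \<alpha> n = z}"
  have "A \<subseteq> {n\<in>I. norm (\<alpha> n) \<le> norm z}" by (auto simp: A_def)
  then have fA: "finite A" using fin[of "norm z"] z finite_subset by auto
  then obtain N where N: "A \<subseteq> {..<N}" using finite_nat_bounded by blast
  interpret T: disc_product "\<lambda>n. \<alpha> (n + N)" "{n. n + N \<in> I}" "\<lambda>n. p (n + N)"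
    by (rule shifted_product)
  have "T.g n = g (n + N)" for n
    by (auto simp: T.g_def g_def T.w_def w_def T.\<beta>_def \<beta>_def fun_eq_iff)
  then have Tf: "T.f x = (\<Prod>k. g (k + N) x)" for x by (simp add: T.f_def)
  define h where "h w = (\<Prod>n\<in>{..<N} - A. g n w) * T.f w" for w
  show ?thesis
  proof (rule that[of h])
    show "h holomorphic_on ball 0 1" unfolding h_def by (intro holomorphic_intros g_hol T.f_hol)
    have "g n z \<noteq> 0" if "n \<in> {..<N} - A" for n using g_zero[OF z, of n] that by (auto simp: A_def)
    moreover have "T.f z \<noteq> 0"
    proof
      assume "T.f z = 0"
      then obtain n where "n + N \<in> I" "\<alpha> (n + N) = z" using T.f_zero[OF z] by auto
      then show False using N by (auto simp: A_def)
    qed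
    ultimately show "h z \<noteq> 0" by (simp add: h_def)
    fix w :: complex assume w: "w \<in> ball 0 1"
    have "(\<lambda>n. g n w) has_prod ((\<Prod>k<N. g k w) * (\<Prod>k. g (k + N) w))"
      by (rule has_prod_ignore_initial_segment'[OF convergent[OF w]])
    then have "f w = (\<Prod>k<N. g k w) * T.f w"
      using has_prod[OF w] has_prod_unique2 Tf by metis
    also have "{..<N} = ({..<N} - A) \<union> A" using N by auto
    also have "(\<Prod>k\<in>({..<N} - A) \<union> A. g k w) = (\<Prod>k\<in>{..<N} - A. g k w) * (\<Prod>k\<in>A. g k w)"
      by (intro prod.union_disjoint) (use fA in auto)
    finally show "f w = h w * (\<Prod>n\<in>{n\<in>I. \<alpha> n = z}. g n w)" by (simp add: h_def A_def mult_ac)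
  qed
qed

text \<open>Hence the product has a zero of order exactly \<open>#{n \<in> I. \<alpha>\<^sub>n = z}\<close> at every \<open>z\<close>, each
  factor vanishing at \<open>z\<close> contributing order one.\<close>
lemma zorder_f:
  assumes z: "z \<in> ball 0 1"
  shows "zorder f z = int (card {n\<in>I. \<alpha> n = z})"
proof -
  obtain h where h: "h holomorphic_on ball 0 1" "h z \<noteq> 0"
      "\<And>w. w \<in> ball 0 1 \<Longrightarrow> f w = h w * (\<Prod>n\<in>{n\<in>I. \<alpha> n = z}. g n w)"
    by (rule product_split_at[OF z]) (assumption | rule that)+
  define A where "A = {n\<in>I. \<alpha> n = z}"
  have f_eq: "f w = h w * (\<Prod>n\<in>A. g n w)" if "w \<in> ball 0 1" for w
    using h(3)[OF that] by (simp add: A_def)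
  have h_an: "h analytic_on {z}" by (rule holomorphic_on_imp_analytic_at[OF h(1) open_ball z])
  have prod_an: "(\<lambda>w. \<Prod>n\<in>A. g n w) analytic_on {z}"
    by (rule holomorphic_on_imp_analytic_at[OF _ open_ball z]) (intro holomorphic_intros g_hol)
  have ev: "eventually (\<lambda>w. h w * (\<Prod>n\<in>A. g n w) \<noteq> 0) (at z)"
    using f_ev_nz[OF z] by eventually_elim (use f_eq in auto)
  have "zorder f z = zorder (\<lambda>w. h w * (\<Prod>n\<in>A. g n w)) z"
    by (rule zorder_cong) (use f_ev_nz[OF z] f_eq in \<open>auto elim: eventually_mono\<close>)
  also have "\<dots> = zorder h z + zorder (\<lambda>w. \<Prod>n\<in>A. g n w) z"
    by (rule zorder_times_analytic[OF h_an prod_an ev])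
  also have "zorder h z = 0" by (rule zorder_eq_0I[OF h_an h(2)])
  also have "zorder (\<lambda>w. \<Prod>n\<in>A. g n w) z = (\<Sum>n\<in>A. zorder (g n) z)"
  proof (rule zorder_prod_analytic)
    show "g n analytic_on {z}" if "n \<in> A" for n by (rule holomorphic_on_imp_analytic_at[OF g_hol open_ball z])
    show "eventually (\<lambda>w. (\<Prod>n\<in>A. g n w) \<noteq> 0) (at z)"
      using ev by eventually_elim simp
  qed
  also have "(\<Sum>n\<in>A. zorder (g n) z) = (\<Sum>n\<in>A. 1)"
    by (intro sum.cong refl) (use zorder_g in \<open>auto simp: A_def\<close>)
  finally show ?thesis by (simp add: A_def)
qed

end

lemma zorder_of_local_square:
  fixes q :: "complex \<Rightarrow> complex"
  assumes q: "q holomorphic_on ball 0 1" and nz: "\<exists>w\<in>ball 0 1. q w \<noteq> 0" and \<alpha>: "\<alpha> \<in> ball 0 1"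
    and J: "\<rho> > 0" "J holomorphic_on ball \<alpha> \<rho>" "\<And>z. z \<in> ball \<alpha> \<rho> \<Longrightarrow> q z = (J z)^2"
  obtains j where "zorder q \<alpha> = int (2 * j)" "q \<alpha> = 0 \<longleftrightarrow> j > 0"
proof (cases "q \<alpha> = 0")
  case False
  have "zorder q \<alpha> = 0"
    by (rule zorder_eq_0I[OF holomorphic_on_imp_analytic_at[OF q open_ball \<alpha>] False])
  then show ?thesis using False by (intro that[of 0]) simp_all
next
  case True
  obtain k r u where u: "0 < r" "ball \<alpha> r \<subseteq> ball 0 1" "u holomorphic_on ball \<alpha> r"
      "\<And>w. w \<in> ball \<alpha> r \<Longrightarrow> q w = (w - \<alpha>)^k * u w" "\<And>w. w \<in> ball \<alpha> r \<Longrightarrow> u w \<noteq> 0"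
    by (rule holomorphic_local_factorization[OF q open_ball connected_ball \<alpha> nz]) (rule that, assumption+)
  define w0 where "w0 = \<alpha> + of_real (min \<rho> r / 2)"
  have w0: "w0 \<in> ball \<alpha> \<rho>" "w0 \<in> ball \<alpha> r" "w0 \<noteq> \<alpha>"
    using J(1) u(1) by (auto simp: w0_def dist_norm)
  have "J w0 \<noteq> 0" using u(4,5)[OF w0(2)] w0(3) J(3)[OF w0(1)] by auto
  then have J_nz: "\<exists>w\<in>ball \<alpha> \<rho>. J w \<noteq> 0" using w0(1) by blast
  have "\<alpha> \<in> ball \<alpha> \<rho>" using J(1) by simp
  then obtain j r' g where g: "0 < r'" "ball \<alpha> r' \<subseteq> ball \<alpha> \<rho>" "g holomorphic_on ball \<alpha> r'"
      "\<And>w. w \<in> ball \<alpha> r' \<Longrightarrow> J w = (w - \<alpha>)^j * g w" "\<And>w. w \<in> ball \<alpha> r' \<Longrightarrow> g w \<noteq> 0"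
    by (rule holomorphic_local_factorization[OF J(2) open_ball connected_ball _ J_nz]) (rule that, assumption+)
  have order: "zorder q \<alpha> = int (2 * j)"
  proof (rule zorder_local_factor[OF g(1)])
    show "(\<lambda>w. g w ^ 2) holomorphic_on ball \<alpha> r'" using g(3) by (intro holomorphic_intros)
    show "g \<alpha> ^ 2 \<noteq> 0" using g(1,5) by simp
    fix w assume w: "w \<in> ball \<alpha> r'"
    have "q w = (J w)^2" using J(3) g(2) w by auto
    also have "\<dots> = (w - \<alpha>)^(2 * j) * g w ^ 2"
      using g(4)[OF w] by (simp add: power_mult_distrib power_mult[symmetric] mult.commute)
    finally show "q w = (w - \<alpha>)^(2 * j) * g w ^ 2" .
  qed
  have "j > 0"
  proof (rule ccontr)
    assume "\<not> j > 0"
    then have "J \<alpha> = g \<alpha>" using g(4)[of \<alpha>] g(1) by simp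
    then show False using g(5)[of \<alpha>] g(1) True J(1) J(3)[of \<alpha>] by simp
  qed
  then show ?thesis using True by (intro that[OF order]) simp
qed

lemma enumeration_with_multiplicities:
  fixes k :: "'a \<Rightarrow> nat"
  assumes "countable {z. k z \<noteq> 0}"
  obtains \<alpha> :: "nat \<Rightarrow> 'a" and I :: "nat set" where "\<And>n. n \<in> I \<Longrightarrow> k (\<alpha> n) \<noteq> 0"
    "\<And>X. finite {z \<in> X. k z \<noteq> 0} \<Longrightarrow> finite {n\<in>I. \<alpha> n \<in> X}"
    "\<And>z. card {n\<in>I. \<alpha> n = z} = k z"
proof -
  define S where "S = (SIGMA z:{z. k z \<noteq> 0}. {..<k z})"
  have "countable S" unfolding S_def using assms by auto
  define idx where "idx = to_nat_on S"
  have inj: "inj_on idx S" unfolding idx_def using \<open>countable S\<close> by blast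
  define I where "I = idx ` S"
  define \<alpha> where "\<alpha> n = fst (inv_into S idx n)" for n
  have \<alpha>_idx: "\<alpha> (idx x) = fst x" if "x \<in> S" for x using that inj by (simp add: \<alpha>_def)
  have set_eq: "{n\<in>I. \<alpha> n \<in> X} = idx ` {x\<in>S. fst x \<in> X}" for X
  proof
    show "{n\<in>I. \<alpha> n \<in> X} \<subseteq> idx ` {x\<in>S. fst x \<in> X}"
    proof
      fix n assume n: "n \<in> {n\<in>I. \<alpha> n \<in> X}"
      then have "inv_into S idx n \<in> S" "idx (inv_into S idx n) = n"
        using inv_into_into[of n idx S] f_inv_into_f[of n idx S] by (auto simp: I_def)
      then show "n \<in> idx ` {x\<in>S. fst x \<in> X}" using n by (force simp: \<alpha>_def)
    qed
    show "idx ` {x\<in>S. fst x \<in> X} \<subseteq> {n\<in>I. \<alpha> n \<in> X}" using \<alpha>_idx by (auto simp: I_def)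
  qed
  show ?thesis
  proof (rule that[of I \<alpha>])
    fix n assume "n \<in> I"
    then have "inv_into S idx n \<in> S" using inv_into_into[of n idx S] by (simp add: I_def)
    then show "k (\<alpha> n) \<noteq> 0" by (auto simp: \<alpha>_def S_def)
  next
    fix X assume "finite {z \<in> X. k z \<noteq> 0}"
    moreover have "{x\<in>S. fst x \<in> X} = (SIGMA z:{z \<in> X. k z \<noteq> 0}. {..<k z})"
      by (auto simp: S_def)
    ultimately show "finite {n\<in>I. \<alpha> n \<in> X}" using set_eq[of X] by simp
  next
    fix z
    have "card {n\<in>I. \<alpha> n = z} = card (idx ` {x\<in>S. fst x \<in> {z}})" using set_eq[of "{z}"] by simp
    also have "\<dots> = card {x\<in>S. fst x \<in> {z}}"
      by (rule card_image) (rule inj_on_subset[OF inj], auto)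
    also have "{x\<in>S. fst x \<in> {z}} = {z} \<times> {..<k z}" by (auto simp: S_def)
    finally show "card {n\<in>I. \<alpha> n = z} = k z" by (simp add: card_cartesian_product)
  qed
qed

theorem holomorphic_with_prescribed_zeros:
  fixes k :: "complex \<Rightarrow> nat"
  assumes supp: "\<And>z. k z \<noteq> 0 \<Longrightarrow> z \<in> ball 0 1"
    and fin: "\<And>R. R < 1 \<Longrightarrow> finite {z \<in> cball 0 R. k z \<noteq> 0}"
  obtains W where "W holomorphic_on ball 0 1" "\<And>z. z \<in> ball 0 1 \<Longrightarrow> W z = 0 \<longleftrightarrow> k z \<noteq> 0"
    "\<And>z. z \<in> ball 0 1 \<Longrightarrow> zorder W z = int (k z)"
proof -
  have "{z. k z \<noteq> 0} \<subseteq> (\<Union>n. {z \<in> cball 0 (1 - inverse (Suc n)). k z \<noteq> 0})"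
  proof
    fix z assume z: "z \<in> {z. k z \<noteq> 0}"
    then have "0 < 1 - norm z" using supp by auto
    then obtain n where "inverse (Suc n) < 1 - norm z" using reals_Archimedean by blast
    then show "z \<in> (\<Union>n. {z \<in> cball 0 (1 - inverse (Suc n)). k z \<noteq> 0})"
      using z by (auto intro!: exI[of _ n])
  qed
  moreover have "countable (\<Union>n. {z \<in> cball 0 (1 - inverse (Suc n)). k z \<noteq> 0})"
  proof (rule countable_UN[OF countableI_type])
    show "countable {z \<in> cball 0 (1 - inverse (Suc n)). k z \<noteq> 0}" for n
      by (rule countable_finite, rule fin) simp
  qed
  ultimately have "countable {z. k z \<noteq> 0}" by (rule countable_subset)
  then obtain \<alpha> :: "nat \<Rightarrow> complex" and I where \<alpha>: "\<And>n. n \<in> I \<Longrightarrow> k (\<alpha> n) \<noteq> 0"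
      "\<And>X. finite {z \<in> X. k z \<noteq> 0} \<Longrightarrow> finite {n\<in>I. \<alpha> n \<in> X}"
      "\<And>z. card {n\<in>I. \<alpha> n = z} = k z"
    by (rule enumeration_with_multiplicities) (assumption | rule that)+
  interpret W: disc_product \<alpha> I "\<lambda>n. n"
  proof
    show "\<alpha> n \<in> ball 0 1" if "n \<in> I" for n using supp \<alpha>(1)[OF that] .
    show "finite {n\<in>I. norm (\<alpha> n) \<le> R}" if "R < 1" for R
      using \<alpha>(2)[OF fin[OF that]] by simp
  qed simp
  show ?thesis
  proof (rule that[OF W.f_hol])
    fix z :: complex assume z: "z \<in> ball 0 1"
    show "zorder W.f z = int (k z)" using W.zorder_f[OF z] \<alpha>(3) by simp
    have "finite {n\<in>I. \<alpha> n = z}" using \<alpha>(2)[of "{z}"] by simp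
    then have "k z \<noteq> 0 \<longleftrightarrow> {n\<in>I. \<alpha> n = z} \<noteq> {}" using \<alpha>(3)[of z] card_0_eq by metis
    then show "W.f z = 0 \<longleftrightarrow> k z \<noteq> 0" using W.f_zero[OF z] by blast
  qed
qed

lemma zorder_square:
  fixes W :: "complex \<Rightarrow> complex"
  assumes W: "W holomorphic_on ball 0 1" "\<exists>w\<in>ball 0 1. W w \<noteq> 0" and z: "z \<in> ball 0 1"
  shows "zorder (\<lambda>z. W z ^ 2) z = 2 * zorder W z"
proof -
  have an: "W analytic_on {z}" by (rule holomorphic_on_imp_analytic_at[OF W(1) open_ball z])
  have "eventually (\<lambda>w. W w \<noteq> 0 \<and> w \<in> ball 0 1) (at z)"
    using W(2) non_zero_neighbour_alt[OF W(1) open_ball connected_ball z] by blast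
  then have "frequently (\<lambda>w. W w \<noteq> 0) (at z)"
    by (auto intro: eventually_frequently elim: eventually_mono)
  then show ?thesis
    using zorder_power[OF analytic_on_imp_meromorphic_on[OF an], of 2] by simp
qed

text \<open>A holomorphic function on the disc that is locally a square is globally a square:
  divide it by the square of a function with half its zeros (which leaves a nonvanishing
  function) and take the square root of the quotient.\<close>
theorem global_square_root:
  fixes q :: "complex \<Rightarrow> complex"
  assumes q: "q holomorphic_on ball 0 1"
    and local: "\<And>\<alpha>. \<alpha> \<in> ball 0 1 \<Longrightarrow> \<exists>\<rho>>0. \<exists>J. J holomorphic_on ball \<alpha> \<rho> \<and> (\<forall>z\<in>ball \<alpha> \<rho>. q z = (J z)^2)"
  obtains d where "d holomorphic_on ball 0 1" "\<And>z. z \<in> ball 0 1 \<Longrightarrow> q z = (d z)^2"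
proof (cases "\<exists>w\<in>ball 0 1. q w \<noteq> 0")
  case False
  then show ?thesis by (intro that[of "\<lambda>_. 0"]) auto
next
  case True
  define k where "k z = (if z \<in> ball 0 1 then nat (zorder q z) div 2 else 0)" for z
  have k: "zorder q z = int (2 * k z) \<and> (q z = 0 \<longleftrightarrow> k z > 0)" if z: "z \<in> ball 0 1" for z
  proof -
    obtain \<rho> J where "\<rho> > 0" "J holomorphic_on ball z \<rho>" "\<And>w. w \<in> ball z \<rho> \<Longrightarrow> q w = (J w)^2"
      using local[OF z] by blast
    then obtain j where "zorder q z = int (2 * j)" "q z = 0 \<longleftrightarrow> j > 0"
      by (rule zorder_of_local_square[OF q True z])
    then show ?thesis using z by (simp add: k_def nat_mult_distrib)
  qed
  obtain W where W: "W holomorphic_on ball 0 1" "\<And>z. z \<in> ball 0 1 \<Longrightarrow> W z = 0 \<longleftrightarrow> k z \<noteq> 0"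
      "\<And>z. z \<in> ball 0 1 \<Longrightarrow> zorder W z = int (k z)"
  proof (rule holomorphic_with_prescribed_zeros)
    show "z \<in> ball 0 1" if "k z \<noteq> 0" for z using that by (auto simp: k_def split: if_splits)
    fix R :: real assume R: "R < 1"
    have "{z \<in> cball 0 R. k z \<noteq> 0} \<subseteq> {z \<in> cball 0 R. q z = 0}"
      using k R by (auto simp: k_def split: if_splits)
    moreover have "finite {z \<in> cball 0 R. q z = 0}"
      using R by (intro zeros_finite_in_compact[OF q open_ball connected_ball True])
        (simp_all add: cball_subset_ball_iff)
    ultimately show "finite {z \<in> cball 0 R. k z \<noteq> 0}" by (rule finite_subset)
  qed (rule that, assumption+)
  have W2_hol: "(\<lambda>z. W z ^ 2) holomorphic_on ball 0 1" by (intro holomorphic_intros W(1))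
  have W2_zero: "W z ^ 2 = 0 \<longleftrightarrow> q z = 0" if "z \<in> ball 0 1" for z
    using W(2)[OF that] k[OF that] by simp
  have W_nz: "\<exists>w\<in>ball 0 1. W w \<noteq> 0"
  proof -
    obtain w where w: "w \<in> ball 0 1" "q w \<noteq> 0" using True by blast
    then have "W w \<noteq> 0" using W(2)[OF w(1)] k[OF w(1)] by simp
    then show ?thesis using w(1) by blast
  qed
  have W2_order: "zorder (\<lambda>z. W z ^ 2) z = zorder q z" if z: "z \<in> ball 0 1" for z
    using zorder_square[OF W(1) W_nz z] W(3)[OF z] k[OF z] by simp
  obtain h where h: "h holomorphic_on ball 0 1" "\<And>z. z \<in> ball 0 1 \<Longrightarrow> h z \<noteq> 0"
      "\<And>z. z \<in> ball 0 1 \<Longrightarrow> q z = h z * W z ^ 2"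
    by (rule holomorphic_zorder_factorization[OF q open_ball connected_ball W2_hol W2_zero W2_order])
      (assumption | rule that)+
  obtain s where s: "s holomorphic_on ball 0 1" "\<And>z. z \<in> ball 0 1 \<Longrightarrow> h z = s z ^ 2"
    using contractible_imp_holomorphic_sqrt[OF h(1) convex_imp_contractible[OF convex_ball] h(2)] by blast
  show ?thesis
  proof (rule that[of "\<lambda>z. s z * W z"])
    show "(\<lambda>z. s z * W z) holomorphic_on ball 0 1" by (intro holomorphic_intros s(1) W(1))
    fix z :: complex assume z: "z \<in> ball 0 1"
    show "q z = (s z * W z)^2" using h(3)[OF z] s(2)[OF z] by (simp add: power_mult_distrib)
  qed
qed

lemma discriminant_identity:
  fixes M :: "complex^2^2"
  assumes "piMap M = (a, s, p)"
  shows "((M $ 1 $ 1 - M $ 2 $ 2) / 2)^2 = s^2 / 4 - p - a * M $ 1 $ 2"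
  using assms by (auto simp: piMap_def det_2 field_simps power2_eq_square)

lemma lift_from_square_root_mod:
  fixes a s p d b :: "complex \<Rightarrow> complex"
  assumes hol: "a holomorphic_on S" "s holomorphic_on S" "d holomorphic_on S" "b holomorphic_on S"
    and eq: "\<And>z. z \<in> S \<Longrightarrow> s z ^ 2 / 4 - p z - (d z)^2 = a z * b z"
  shows "\<exists>H :: complex \<Rightarrow> complex^2^2. (\<forall>i j. (\<lambda>z. H z $ i $ j) holomorphic_on S) \<and>
    (\<forall>z\<in>S. piMap (H z) = (a z, s z, p z))"
proof -
  define H :: "complex \<Rightarrow> complex^2^2" where
    "H z = (\<chi> i j. if i = 1 then (if j = 1 then s z / 2 + d z else b z)
                             else (if j = 1 then a z else s z / 2 - d z))" for z
  have entries: "H z $ 1 $ 1 = s z / 2 + d z" "H z $ 1 $ 2 = b z" "H z $ 2 $ 1 = a z"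
    "H z $ 2 $ 2 = s z / 2 - d z" for z
    by (simp_all add: H_def)
  have "(\<lambda>z. H z $ i $ j) holomorphic_on S" for i j :: 2
    using exhaust_2[of i] exhaust_2[of j] hol by (auto simp: entries intro!: holomorphic_intros)
  moreover have "piMap (H z) = (a z, s z, p z)" if "z \<in> S" for z
    using eq[OF that] by (simp add: piMap_def det_2 entries field_simps power2_eq_square)
  ultimately show ?thesis by blast
qed

text \<open>Necessity: if \<open>h = \<pi> \<circ> H\<close>, then \<open>((H\<^sub>1\<^sub>1 - H\<^sub>2\<^sub>2)/2)\<^sup>2 = q - a H\<^sub>1\<^sub>2\<close> with \<open>q = s\<^sup>2/4 - p\<close>.
  If \<open>q\<close> had a zero of exact odd order \<open>n\<close> at \<open>\<alpha>\<close> and \<open>a\<close> one of order \<open>> n\<close>, the right-hand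
  side would be \<open>(z - \<alpha>)^n\<close> times a function not vanishing at \<open>\<alpha>\<close>, which is impossible for a
  square.\<close>
lemma lift_excludes_odd_obstruction:
  fixes a s p :: "complex \<Rightarrow> complex" and H :: "complex \<Rightarrow> complex^2^2"
  defines "q \<equiv> \<lambda>z. s z ^ 2 / 4 - p z"
  assumes H: "\<And>i j. (\<lambda>z. H z $ i $ j) holomorphic_on ball 0 1"
      "\<And>z. z \<in> ball 0 1 \<Longrightarrow> piMap (H z) = (a z, s z, p z)"
    and q: "q holomorphic_on ball 0 1" and \<alpha>: "\<alpha> \<in> ball 0 1"
    and odd: "odd n" and q_order: "zero_mult_eq q \<alpha> n" and a_order: "zero_mult_ge a \<alpha> (Suc n)"
  shows False
proof -
  have "\<exists>w\<in>ball 0 1. q w \<noteq> 0"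
    using q_order zero_mult_ge_if_vanishing unfolding zero_mult_eq_def by blast
  then obtain k r u where u: "0 < r" "ball \<alpha> r \<subseteq> ball 0 1" "u holomorphic_on ball \<alpha> r"
      "\<And>w. w \<in> ball \<alpha> r \<Longrightarrow> q w = (w - \<alpha>)^k * u w" "\<And>w. w \<in> ball \<alpha> r \<Longrightarrow> u w \<noteq> 0"
    by (rule holomorphic_local_factorization[OF q open_ball connected_ball \<alpha>]) (rule that, assumption+)
  have "n = k" using q_order zero_mult_eq_iff_local_factor[OF q u(1,2,3,5,4)] by simp
  obtain A where A: "A holomorphic_on ball 0 1" "\<And>z. z \<in> ball 0 1 \<Longrightarrow> a z = (z - \<alpha>)^(Suc n) * A z"
    using a_order unfolding zero_mult_ge_def by blast
  define dd where "dd z = (H z $ 1 $ 1 - H z $ 2 $ 2) / 2" for z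
  define v where "v z = u z - (z - \<alpha>) * A z * H z $ 1 $ 2" for z
  have "dd holomorphic_on ball \<alpha> r"
    unfolding dd_def using u(2) by (intro holomorphic_intros holomorphic_on_subset[OF H(1)]) auto
  moreover have "v holomorphic_on ball \<alpha> r"
    unfolding v_def using u(2,3) by (intro holomorphic_intros holomorphic_on_subset[OF H(1)]
        holomorphic_on_subset[OF A(1)]) auto
  moreover have "v \<alpha> \<noteq> 0" using u(1,5) by (simp add: v_def)
  moreover have "(dd z)^2 = (z - \<alpha>)^n * v z" if z: "z \<in> ball \<alpha> r" for z
  proof -
    have zD: "z \<in> ball 0 1" using z u(2) by blast
    have "(dd z)^2 = q z - a z * H z $ 1 $ 2"
      unfolding dd_def q_def by (rule discriminant_identity[OF H(2)[OF zD]])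
    also have "\<dots> = (z - \<alpha>)^n * v z"
      unfolding u(4)[OF z] A(2)[OF zD] v_def \<open>n = k\<close> by (simp add: algebra_simps)
    finally show ?thesis .
  qed
  ultimately have "even n" by (rule even_order_of_square[OF u(1)])
  then show False using odd by simp
qed

lemma square_root_mod_exists:
  fixes a q :: "complex \<Rightarrow> complex"
  assumes a: "a holomorphic_on ball 0 1" and q: "q holomorphic_on ball 0 1"
    and no_obstruction: "\<And>\<alpha>. \<alpha> \<in> ball 0 1 \<Longrightarrow>
      \<not> (\<exists>n. odd n \<and> zero_mult_eq q \<alpha> n \<and> zero_mult_ge a \<alpha> (Suc n))"
  obtains d b where "d holomorphic_on ball 0 1" "b holomorphic_on ball 0 1"
    "\<And>z. z \<in> ball 0 1 \<Longrightarrow> q z - (d z)^2 = a z * b z"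
proof -
  have local: "\<exists>\<rho> J v. \<rho> > 0 \<and> ball \<alpha> \<rho> \<subseteq> ball 0 1 \<and> J holomorphic_on ball \<alpha> \<rho> \<and>
      v holomorphic_on ball \<alpha> \<rho> \<and> (\<forall>z\<in>ball \<alpha> \<rho>. q z - (J z)^2 = a z * v z)"
    if \<alpha>: "\<alpha> \<in> ball 0 1" for \<alpha>
  proof -
    obtain \<rho> J v where "\<rho> > 0" "ball \<alpha> \<rho> \<subseteq> ball 0 1" "J holomorphic_on ball \<alpha> \<rho>"
        "v holomorphic_on ball \<alpha> \<rho>" "\<And>z. z \<in> ball \<alpha> \<rho> \<Longrightarrow> q z - (J z)^2 = a z * v z"
      by (rule local_square_root_mod[OF a q \<alpha> no_obstruction[OF \<alpha>]]) (rule that, assumption+)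
    then show ?thesis by blast
  qed
  show ?thesis
  proof (cases "\<exists>w\<in>ball 0 1. a w \<noteq> 0")
    case True
    show ?thesis by (rule square_mod_nonzero[OF a True q local]) (assumption | rule that)+
  next
    case False
    obtain d where d: "d holomorphic_on ball 0 1" "\<And>z. z \<in> ball 0 1 \<Longrightarrow> q z = (d z)^2"
    proof (rule global_square_root[OF q])
      fix \<alpha> :: complex assume "\<alpha> \<in> ball 0 1"
      then obtain \<rho> J v where "\<rho> > 0" "ball \<alpha> \<rho> \<subseteq> ball 0 1" "J holomorphic_on ball \<alpha> \<rho>"
          "\<forall>z\<in>ball \<alpha> \<rho>. q z - (J z)^2 = a z * v z"
        using local by blast
      then show "\<exists>\<rho>>0. \<exists>J. J holomorphic_on ball \<alpha> \<rho> \<and> (\<forall>z\<in>ball \<alpha> \<rho>. q z = (J z)^2)"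
        using False by (metis right_minus_eq mult_eq_0_iff subsetD)
    qed (rule that, assumption+)
    show ?thesis by (rule that[of d "\<lambda>_. 0"]) (use d False in auto)
  qed
qed

theorem proposition12p4:
  fixes a s p :: "complex \<Rightarrow> complex"
  assumes "a holomorphic_on ball 0 1" "s holomorphic_on ball 0 1" "p holomorphic_on ball 0 1"
    and "\<forall>z\<in>ball 0 1. (a z, s z, p z) \<in> closure Pent"
  shows "(\<exists>H :: complex \<Rightarrow> complex^2^2.
            (\<forall>i j. (\<lambda>z. H z $ i $ j) holomorphic_on ball 0 1) \<and>
            (\<forall>z\<in>ball 0 1. piMap (H z) = (a z, s z, p z)))
     \<longleftrightarrow> \<not> (\<exists>\<alpha>\<in>ball 0 1. \<exists>n::nat. odd n \<and>
            zero_mult_eq (\<lambda>z. s z ^ 2 / 4 - p z) \<alpha> n \<and>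
            zero_mult_ge a \<alpha> (Suc n))"
proof -
  have q: "(\<lambda>z. s z ^ 2 / 4 - p z) holomorphic_on ball 0 1"
    using assms(2,3) by (intro holomorphic_intros) auto
  show ?thesis
  proof
    assume "\<exists>H :: complex \<Rightarrow> complex^2^2. (\<forall>i j. (\<lambda>z. H z $ i $ j) holomorphic_on ball 0 1) \<and>
        (\<forall>z\<in>ball 0 1. piMap (H z) = (a z, s z, p z))"
    then show "\<not> (\<exists>\<alpha>\<in>ball 0 1. \<exists>n. odd n \<and> zero_mult_eq (\<lambda>z. s z ^ 2 / 4 - p z) \<alpha> n \<and>
        zero_mult_ge a \<alpha> (Suc n))"
      using lift_excludes_odd_obstruction[OF _ _ q] by blast
  next
    assume "\<not> (\<exists>\<alpha>\<in>ball 0 1. \<exists>n. odd n \<and> zero_mult_eq (\<lambda>z. s z ^ 2 / 4 - p z) \<alpha> n \<and>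
        zero_mult_ge a \<alpha> (Suc n))"
    then obtain d b where "d holomorphic_on ball 0 1" "b holomorphic_on ball 0 1"
        "\<And>z. z \<in> ball 0 1 \<Longrightarrow> s z ^ 2 / 4 - p z - (d z)^2 = a z * b z"
      using square_root_mod_exists[OF assms(1) q] by blast
    then show "\<exists>H :: complex \<Rightarrow> complex^2^2. (\<forall>i j. (\<lambda>z. H z $ i $ j) holomorphic_on ball 0 1) \<and>
        (\<forall>z\<in>ball 0 1. piMap (H z) = (a z, s z, p z))"
      using lift_from_square_root_mod[OF assms(1,2)] by blast
  qed
qed

end
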